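(* Let $X$ be a set, let $K,L$ be positive definite kernels on $X\times X$, and let $(\varphi,\mathscr{K})\in H_S(K)$ and $(\psi,\mathscr{L})\in H_S(L)$. Then $K\le L$ if and only if there exists a positive selfadjoint operator $B$ on $\mathscr{L}$ with $0\le B\le I$ such that $$K(x,y)=\langle\varphi(x),\varphi(y)\rangle_{\mathscr{K}}=\langle B^{1/2}\psi(x),B^{1/2}\psi(y)\rangle_{\mathscr{L}},\qquad x,y\in X.$$
   Context: A function $K:X\times X\to\mathbb{C}$ is positive definite (p.d.) if $\sum_{i,j=1}^n\overline{c_i}c_jK(x_i,x_j)\ge 0$ for all $n\in\mathbb{N}$, $x_i\in X$, $c_i\in\mathbb{C}$. For p.d. kernels $K,L$ on $X\times X$, $K\le L$ (Loewner order) means that $L-K$ is p.d. For a p.d. kernel $K$, $H_S(K)$ denotes the set of pairs $(\varphi,\mathscr{L})$ where $\mathscr{L}$ is a (separable) Hilbert space and $\varphi:X\to\mathscr{L}$ satisfies $K(x,y)=\langle\varphi(x),\varphi(y)\rangle_{\mathscr{L}}$ for all $x,y\in X$. *)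

theory Defs
  imports Complex_Main
begin

text \<open>The inner product
is conjugate-linear in the first and linear in the second argument, matching
the convention that K(x,y) = <phi x, phi y> is positive definite in the sense
sum conj(c_i) c_j K(x_i,x_j) >= 0.\<close>

class complex_inner = ab_group_add +
  fixes scaleC :: "complex \<Rightarrow> 'a \<Rightarrow> 'a"
    and cinner :: "'a \<Rightarrow> 'a \<Rightarrow> complex"
  assumes scaleC_add_right: "scaleC a (x + y) = scaleC a x + scaleC a y"
    and scaleC_add_left: "scaleC (a + b) x = scaleC a x + scaleC b x"
    and scaleC_scaleC: "scaleC a (scaleC b x) = scaleC (a * b) x"
    and scaleC_one: "scaleC 1 x = x"
    and cinner_commute: "cinner x y = cnj (cinner y x)"
    and cinner_add_right: "cinner x (y + z) = cinner x y + cinner x z"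
    and cinner_scaleC_right: "cinner x (scaleC a y) = a * cinner x y"
    and cinner_ge_zero: "Re (cinner x x) \<ge> 0"
    and cinner_eq_zero_iff: "cinner x x = 0 \<longleftrightarrow> x = 0"

definition cnorm :: "'a::complex_inner \<Rightarrow> real" where
  "cnorm x = sqrt (Re (cinner x x))"

class chilbert = complex_inner +
  assumes complete: "\<And>X::nat \<Rightarrow> 'a.
      (\<forall>e>0. \<exists>N. \<forall>m\<ge>N. \<forall>n\<ge>N. sqrt (Re (cinner (X m - X n) (X m - X n))) < e) \<Longrightarrow>
      (\<exists>l. \<forall>e>0. \<exists>N. \<forall>n\<ge>N. sqrt (Re (cinner (X n - l) (X n - l))) < e)"
    and separable: "\<exists>D::nat \<Rightarrow> 'a. \<forall>x. \<forall>e>0. \<exists>n. sqrt (Re (cinner (x - D n) (x - D n))) < e"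

definition bounded_clinear_op :: "('a::complex_inner \<Rightarrow> 'a) \<Rightarrow> bool" where
  "bounded_clinear_op B \<longleftrightarrow>
     (\<forall>x y. B (x + y) = B x + B y) \<and> (\<forall>a x. B (scaleC a x) = scaleC a (B x)) \<and>
     (\<exists>C. \<forall>x. cnorm (B x) \<le> C * cnorm x)"

definition selfadjoint_op :: "('a::complex_inner \<Rightarrow> 'a) \<Rightarrow> bool" where
  "selfadjoint_op B \<longleftrightarrow> (\<forall>x y. cinner (B x) y = cinner x (B y))"

definition positive_op :: "('a::complex_inner \<Rightarrow> 'a) \<Rightarrow> bool" where
  "positive_op B \<longleftrightarrow> bounded_clinear_op B \<and> selfadjoint_op B \<and>
     (\<forall>x. cinner x (B x) \<in> \<real> \<and> Re (cinner x (B x)) \<ge> 0)"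

definition op_le :: "('a::complex_inner \<Rightarrow> 'a) \<Rightarrow> ('a \<Rightarrow> 'a) \<Rightarrow> bool" where
  "op_le A B \<longleftrightarrow> positive_op (\<lambda>x. B x - A x)"

definition op_sqrt :: "('a::complex_inner \<Rightarrow> 'a) \<Rightarrow> ('a \<Rightarrow> 'a)" where
  "op_sqrt B = (THE R. positive_op R \<and> (\<forall>x. R (R x) = B x))"

definition pd_kernel :: "('x \<Rightarrow> 'x \<Rightarrow> complex) \<Rightarrow> bool" where
  "pd_kernel K \<longleftrightarrow> (\<forall>n (xs::nat \<Rightarrow> 'x) (c::nat \<Rightarrow> complex).
     (\<Sum>i<n. \<Sum>j<n. cnj (c i) * c j * K (xs i) (xs j)) \<in> \<real> \<and>
     Re (\<Sum>i<n. \<Sum>j<n. cnj (c i) * c j * K (xs i) (xs j)) \<ge> 0)"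

definition kernel_le :: "('x \<Rightarrow> 'x \<Rightarrow> complex) \<Rightarrow> ('x \<Rightarrow> 'x \<Rightarrow> complex) \<Rightarrow> bool" where
  "kernel_le K L \<longleftrightarrow> pd_kernel (\<lambda>x y. L x y - K x y)"

text \<open>(phi, H) \<in> H_S(K), where the separable Hilbert space H is the type 'h.\<close>
definition in_HS :: "('x \<Rightarrow> 'x \<Rightarrow> complex) \<Rightarrow> ('x \<Rightarrow> 'h::chilbert) \<Rightarrow> bool" where
  "in_HS K \<phi> \<longleftrightarrow> (\<forall>x y. K x y = cinner (\<phi> x) (\<phi> y))"

end

theory Submission
  imports Defs
begin

text \<open>If K \<le> L, then for every finite combination the norm of sum c_i phi(x_i) is at most
  that of sum c_i psi(x_i). Hence psi(x) \<mapsto> phi(x) extends to a linear contraction T from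
  the space of psi to the space of phi, and its Gram operator B = T* T (obtained from the
  Riesz representation theorem) satisfies 0 \<le> B \<le> I and <B psi x, psi y> = K(x,y); since
  <B^(1/2) u, B^(1/2) v> = <u, B v>, this is the representation. Conversely, from the
  representation L - K = <psi x, (I - B) psi y> is positive definite. The square root of
  0 \<le> A \<le> I is constructed as I - Y for the strong limit Y of an increasing iteration, and
  is unique because positive commuting operators with equal squares coincide.\<close>

lemma scaleC_zero_left[simp]: "scaleC 0 (x::'a::complex_inner) = 0"
  by (metis add_cancel_right_right add_0 scaleC_add_left)

lemma scaleC_zero_right[simp]: "scaleC a (0::'a::complex_inner) = 0"
  by (metis add_cancel_right_right add_0 scaleC_add_right)

lemma scaleC_minus_left: "scaleC (-a) (x::'a::complex_inner) = - scaleC a x"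
  by (metis add.inverse_unique add.left_inverse scaleC_add_left scaleC_zero_left)

lemma scaleC_minus_right: "scaleC a (- x::'a::complex_inner) = - scaleC a x"
  by (metis add.inverse_unique add.left_inverse scaleC_add_right scaleC_zero_right)

lemma scaleC_diff_right: "scaleC a (x - y::'a::complex_inner) = scaleC a x - scaleC a y"
  by (metis diff_conv_add_uminus scaleC_add_right scaleC_minus_right)

lemma scaleC_minus_one[simp]: "scaleC (-1) (x::'a::complex_inner) = - x"
  by (simp add: scaleC_minus_left scaleC_one)

lemma scaleC_two: "scaleC 2 (x::'a::complex_inner) = x + x"
  using scaleC_add_left[of 1 1 x] by (simp add: scaleC_one)

lemma cinner_add_left: "cinner (x + y) (z::'a::complex_inner) = cinner x z + cinner y z"
  by (metis cinner_add_right cinner_commute complex_cnj_add)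

lemma cinner_scaleC_left: "cinner (scaleC a x) (y::'a::complex_inner) = cnj a * cinner x y"
  by (metis cinner_commute cinner_scaleC_right complex_cnj_mult)

lemma cinner_zero_right[simp]: "cinner x (0::'a::complex_inner) = 0"
  by (metis add_cancel_right_right add_0 cinner_add_right)

lemma cinner_zero_left[simp]: "cinner (0::'a::complex_inner) x = 0"
  by (metis add_cancel_right_right add_0 cinner_add_left)

lemma cinner_minus_right: "cinner x (- y::'a::complex_inner) = - cinner x y"
  by (metis add.inverse_unique add.left_inverse cinner_add_right cinner_zero_right)

lemma cinner_minus_left: "cinner (- x::'a::complex_inner) y = - cinner x y"
  by (metis add.inverse_unique add.left_inverse cinner_add_left cinner_zero_left)

lemma cinner_diff_right: "cinner x (y - z::'a::complex_inner) = cinner x y - cinner x z"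
  by (metis diff_conv_add_uminus cinner_add_right cinner_minus_right)

lemma cinner_diff_left: "cinner (x - y::'a::complex_inner) z = cinner x z - cinner y z"
  by (metis diff_conv_add_uminus cinner_add_left cinner_minus_left)

lemmas cinner_simps = cinner_add_left cinner_add_right cinner_diff_left cinner_diff_right
  cinner_minus_left cinner_minus_right cinner_scaleC_left cinner_scaleC_right

lemma cinner_sum_left: "cinner (\<Sum>i\<in>I. g i) (w::'a::complex_inner) = (\<Sum>i\<in>I. cinner (g i) w)"
  by (induction I rule: infinite_finite_induct) (simp_all add: cinner_add_left)

lemma cinner_sum_right: "cinner (w::'a::complex_inner) (\<Sum>i\<in>I. g i) = (\<Sum>i\<in>I. cinner w (g i))"
  by (induction I rule: infinite_finite_induct) (simp_all add: cinner_add_right)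

lemma cinner_eqI: "(\<And>v. cinner a v = cinner b v) \<Longrightarrow> a = (b::'a::complex_inner)"
  using cinner_eq_zero_iff[of "a - b"] by (simp add: cinner_diff_left)

definition cnorm_sq :: "'a::complex_inner \<Rightarrow> real" where
  "cnorm_sq x = Re (cinner x x)"

lemma cinner_self_Im[simp]: "Im (cinner x (x::'a::complex_inner)) = 0"
proof -
  have "Im (cinner x x) = - Im (cinner x x)" by (metis cinner_commute cnj.simps(2))
  thus ?thesis by simp
qed

lemma cinner_self_eq: "cinner x (x::'a::complex_inner) = complex_of_real (cnorm_sq x)"
  by (simp add: cnorm_sq_def complex_eq_iff)

lemma cnorm_sq_nonneg[simp]: "cnorm_sq x \<ge> 0"
  by (simp add: cnorm_sq_def cinner_ge_zero)

lemma cnorm_sq_eq_0_iff[simp]: "cnorm_sq x = 0 \<longleftrightarrow> x = 0"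
  using cinner_self_eq[of x] cinner_eq_zero_iff[of x] by auto

lemma cnorm_sq_pos_iff: "cnorm_sq x > 0 \<longleftrightarrow> x \<noteq> 0"
  using cnorm_sq_nonneg[of x] cnorm_sq_eq_0_iff[of x] by linarith

lemma Re_cinner_commute: "Re (cinner x y) = Re (cinner y (x::'a::complex_inner))"
  by (metis cinner_commute complex_cnj_cnj cnj.simps(1))

lemma cnorm_sq_add: "cnorm_sq (x + y) = cnorm_sq x + cnorm_sq y + 2 * Re (cinner x (y::'a::complex_inner))"
  using Re_cinner_commute[of y x] by (simp add: cnorm_sq_def cinner_simps)

lemma cnorm_sq_diff: "cnorm_sq (x - y) = cnorm_sq x + cnorm_sq y - 2 * Re (cinner x (y::'a::complex_inner))"
  using Re_cinner_commute[of y x] by (simp add: cnorm_sq_def cinner_simps)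

lemma cnorm_sq_minus[simp]: "cnorm_sq (- x) = cnorm_sq (x::'a::complex_inner)"
  by (simp add: cnorm_sq_def cinner_simps)

lemma cnorm_sq_diff_commute: "cnorm_sq (x - y) = cnorm_sq (y - x::'a::complex_inner)"
  by (metis minus_diff_eq cnorm_sq_minus)

lemma cnj_mult_self: "cnj a * a = complex_of_real ((cmod a)^2)"
  by (metis complex_norm_square mult.commute of_real_power)

lemma cnorm_sq_scaleC: "cnorm_sq (scaleC a x) = (cmod a)^2 * cnorm_sq (x::'a::complex_inner)"
proof -
  have "cinner (scaleC a x) (scaleC a x) = (cnj a * a) * cinner x x"
    by (simp add: cinner_simps)
  thus ?thesis by (simp add: cnorm_sq_def cnj_mult_self)
qed

lemma parallelogram_law:
  "cnorm_sq (a - b) + cnorm_sq (a + b) = 2 * cnorm_sq a + 2 * cnorm_sq (b::'a::complex_inner)"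
  by (simp add: cnorm_sq_add cnorm_sq_diff)

lemma nonneg_quadratic_imp_le:
  fixes A B C :: real
  assumes "\<And>t. 0 \<le> A - 2 * t * B + t^2 * B * C" "B \<ge> 0" "C \<ge> 0" "A \<ge> 0"
  shows "B \<le> A * C"
proof (cases "C = 0")
  case True
  show ?thesis
  proof (rule ccontr)
    assume "\<not> B \<le> A * C"
    hence "B > 0" using True by simp
    have h: "0 \<le> A - 2 * t * B" for t using assms(1)[of t] True by simp
    have "2 * ((A + 1) / (2 * B)) * B = A + 1" using \<open>B > 0\<close> by (simp add: field_simps)
    thus False using h[of "(A + 1) / (2 * B)"] by linarith
  qed
next
  case False
  hence "C > 0" using assms by simp
  have "0 \<le> A - 2 * (1/C) * B + (1/C)^2 * B * C" using assms(1) .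
  also have "\<dots> = A - B / C" using \<open>C > 0\<close> by (simp add: field_simps power2_eq_square)
  finally show ?thesis using \<open>C > 0\<close> by (simp add: field_simps)
qed

lemma hermitian_form_cauchy_schwarz:
  fixes f :: "'a::complex_inner \<Rightarrow> 'a \<Rightarrow> complex"
  assumes add_right: "\<And>x y z. f x (y + z) = f x y + f x z"
    and add_left: "\<And>x y z. f (x + y) z = f x z + f y z"
    and scale_right: "\<And>x a y. f x (scaleC a y) = a * f x y"
    and scale_left: "\<And>x a y. f (scaleC a x) y = cnj a * f x y"
    and hermitian: "\<And>x y. f x y = cnj (f y x)"
    and nonneg: "\<And>x. Re (f x x) \<ge> 0"
  shows "(cmod (f x y))^2 \<le> Re (f x x) * Re (f y y)"
proof -
  define b where "b = f y x"
  have fxy: "f x y = cnj b" using hermitian[of x y] unfolding b_def by simp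
  have diff_right: "f u (v - w) = f u v - f u w" for u v w
    by (metis add_right add_diff_cancel_right' diff_add_cancel)
  have diff_left: "f (v - w) u = f v u - f w u" for u v w
    by (metis add_left add_diff_cancel_right' diff_add_cancel)
  have expand: "f (x - w) (x - w) = f x x - f x w - f w x + f w w" for w
    by (simp only: diff_left diff_right) (simp add: algebra_simps)
  have "0 \<le> Re (f x x) - 2 * t * (cmod b)^2 + t^2 * (cmod b)^2 * Re (f y y)" for t :: real
  proof -
    define s where "s = complex_of_real t * b"
    have h1: "f x (scaleC s y) = complex_of_real (t * (cmod b)^2)"
      using cnj_mult_self[of b] by (simp add: scale_right fxy s_def mult.commute mult.left_commute)
    have h2: "f (scaleC s y) x = complex_of_real (t * (cmod b)^2)"
      using cnj_mult_self[of b]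
      by (simp add: scale_left b_def[symmetric] s_def mult.commute mult.left_commute)
    have "cnj s * s = complex_of_real (t^2 * (cmod b)^2)"
      using cnj_mult_self[of b] by (simp add: s_def power2_eq_square mult.commute mult.left_commute)
    moreover have "f (scaleC s y) (scaleC s y) = (cnj s * s) * f y y"
      by (simp add: scale_left scale_right)
    ultimately have h3: "f (scaleC s y) (scaleC s y) = complex_of_real (t^2 * (cmod b)^2) * f y y"
      by simp
    have "Re (f (x - scaleC s y) (x - scaleC s y))
        = Re (f x x) - 2 * t * (cmod b)^2 + t^2 * (cmod b)^2 * Re (f y y)"
      unfolding expand h1 h2 h3 by simp
    thus ?thesis using nonneg by metis
  qed
  hence "(cmod b)^2 \<le> Re (f x x) * Re (f y y)"
    by (intro nonneg_quadratic_imp_le) (auto simp: nonneg)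
  thus ?thesis using fxy by simp
qed

lemma cinner_cauchy_schwarz_sq: "(cmod (cinner x y))^2 \<le> cnorm_sq x * cnorm_sq (y::'a::complex_inner)"
  unfolding cnorm_sq_def
  by (rule hermitian_form_cauchy_schwarz) (auto simp: cinner_simps cinner_ge_zero intro: cinner_commute)

lemma cnorm_eq_sqrt: "cnorm x = sqrt (cnorm_sq x)"
  by (simp add: cnorm_def cnorm_sq_def)

lemma cnorm_ge_zero[simp]: "cnorm x \<ge> 0"
  by (simp add: cnorm_eq_sqrt)

lemma power2_cnorm: "(cnorm x)^2 = cnorm_sq x"
  by (simp add: cnorm_eq_sqrt)

lemma cnorm_eq_zero_iff[simp]: "cnorm x = 0 \<longleftrightarrow> x = 0"
  by (simp add: cnorm_eq_sqrt)

lemma cnorm_zero[simp]: "cnorm (0::'a::complex_inner) = 0"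
  by simp

lemma cnorm_le_iff_cnorm_sq_le: "cnorm x \<le> cnorm y \<longleftrightarrow> cnorm_sq x \<le> cnorm_sq y"
  by (simp add: cnorm_eq_sqrt)

lemma cinner_cauchy_schwarz: "cmod (cinner x y) \<le> cnorm x * cnorm (y::'a::complex_inner)"
proof -
  have "(cmod (cinner x y))^2 \<le> (cnorm x * cnorm y)^2"
    using cinner_cauchy_schwarz_sq[of x y] by (simp add: power_mult_distrib power2_cnorm)
  thus ?thesis by (meson cnorm_ge_zero mult_nonneg_nonneg power2_le_imp_le)
qed

lemma Re_cinner_le: "Re (cinner x y) \<le> cnorm x * cnorm (y::'a::complex_inner)"
  using cinner_cauchy_schwarz complex_Re_le_cmod order_trans by blast

lemma cnorm_triangle: "cnorm (x + y) \<le> cnorm x + cnorm (y::'a::complex_inner)"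
proof -
  have "cnorm_sq (x + y) \<le> (cnorm x + cnorm y)^2"
    using Re_cinner_le[of x y] by (simp add: cnorm_sq_add power2_sum power2_cnorm)
  thus ?thesis by (metis cnorm_ge_zero add_nonneg_nonneg power2_cnorm power2_le_imp_le)
qed

lemma cnorm_minus[simp]: "cnorm (- x) = cnorm (x::'a::complex_inner)"
  by (simp add: cnorm_eq_sqrt)

lemma cnorm_diff_commute: "cnorm (x - y) = cnorm (y - x::'a::complex_inner)"
  by (metis minus_diff_eq cnorm_minus)

lemma cnorm_diff_le: "cnorm (x - y) \<le> cnorm x + cnorm (y::'a::complex_inner)"
  by (metis cnorm_minus cnorm_triangle diff_conv_add_uminus)

lemma cnorm_diff_triangle: "cnorm (x - z) \<le> cnorm (x - y) + cnorm (y - z::'a::complex_inner)"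
  by (metis cnorm_triangle diff_add_cancel add_diff_eq)

lemma cnorm_scaleC: "cnorm (scaleC a x) = cmod a * cnorm (x::'a::complex_inner)"
  by (simp add: cnorm_eq_sqrt cnorm_sq_scaleC real_sqrt_mult)

lemma cnorm_triangle_ineq3: "\<bar>cnorm x - cnorm y\<bar> \<le> cnorm (x - y::'a::complex_inner)"
  using cnorm_diff_triangle[of x 0 y] cnorm_diff_triangle[of y 0 x] cnorm_diff_commute[of x y]
  by (simp add: abs_le_iff)

definition ctendsto :: "(nat \<Rightarrow> 'a::complex_inner) \<Rightarrow> 'a \<Rightarrow> bool" where
  "ctendsto X l \<longleftrightarrow> (\<lambda>n. cnorm (X n - l)) \<longlonglongrightarrow> 0"

definition cCauchy :: "(nat \<Rightarrow> 'a::complex_inner) \<Rightarrow> bool" where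
  "cCauchy X \<longleftrightarrow> (\<forall>e>0. \<exists>N. \<forall>m\<ge>N. \<forall>n\<ge>N. cnorm (X m - X n) < e)"

lemma LIMSEQ_zero_squeeze:
  fixes f g :: "nat \<Rightarrow> real"
  assumes "\<And>n. 0 \<le> f n" "\<And>n. f n \<le> g n" "g \<longlonglongrightarrow> 0"
  shows "f \<longlonglongrightarrow> 0"
  by (rule tendsto_sandwich[where f="\<lambda>_. 0" and g=f and h=g]) (use assms in auto)

lemma ctendsto_const[simp]: "ctendsto (\<lambda>n. x) x"
  by (simp add: ctendsto_def)

lemma ctendsto_add:
  assumes "ctendsto X a" "ctendsto Y b" shows "ctendsto (\<lambda>n. X n + Y n) (a + b)"
  unfolding ctendsto_def
proof (rule LIMSEQ_zero_squeeze)
  show "cnorm (X n + Y n - (a + b)) \<le> cnorm (X n - a) + cnorm (Y n - b)" for n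
    by (metis cnorm_triangle add_diff_add)
  show "(\<lambda>n. cnorm (X n - a) + cnorm (Y n - b)) \<longlonglongrightarrow> 0"
    using tendsto_add[OF assms[unfolded ctendsto_def]] by simp
qed simp

lemma ctendsto_scaleC:
  assumes "ctendsto X a" shows "ctendsto (\<lambda>n. scaleC c (X n)) (scaleC c a)"
  using tendsto_mult_right_zero[OF assms[unfolded ctendsto_def], where c="cmod c"]
  unfolding ctendsto_def by (simp add: scaleC_diff_right[symmetric] cnorm_scaleC)

lemma ctendsto_diff:
  assumes "ctendsto X a" "ctendsto Y b" shows "ctendsto (\<lambda>n. X n - Y n) (a - b)"
  using ctendsto_add[OF assms(1) ctendsto_scaleC[OF assms(2), of "-1"]] by simp

lemma ctendsto_unique:
  assumes "ctendsto X a" "ctendsto X b" shows "a = b"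
proof -
  have "(\<lambda>n. cnorm (a - b)) \<longlonglongrightarrow> 0"
  proof (rule LIMSEQ_zero_squeeze)
    show "cnorm (a - b) \<le> cnorm (X n - a) + cnorm (X n - b)" for n
      using cnorm_diff_triangle[of a b "X n"] cnorm_diff_commute[of a "X n"] by linarith
    show "(\<lambda>n. cnorm (X n - a) + cnorm (X n - b)) \<longlonglongrightarrow> 0"
      using tendsto_add[OF assms[unfolded ctendsto_def]] by simp
  qed simp
  thus ?thesis by (simp add: LIMSEQ_const_iff)
qed

lemma ctendsto_cinner_left:
  assumes "ctendsto X a" shows "(\<lambda>n. cinner (X n) y) \<longlonglongrightarrow> cinner a y"
proof -
  have "(\<lambda>n. cmod (cinner (X n) y - cinner a y)) \<longlonglongrightarrow> 0"
  proof (rule LIMSEQ_zero_squeeze)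
    show "cmod (cinner (X n) y - cinner a y) \<le> cnorm (X n - a) * cnorm y" for n
      using cinner_cauchy_schwarz[of "X n - a" y] by (simp add: cinner_simps)
    show "(\<lambda>n. cnorm (X n - a) * cnorm y) \<longlonglongrightarrow> 0"
      using assms tendsto_mult_left_zero unfolding ctendsto_def by blast
  qed simp
  thus ?thesis by (rule LIM_zero_cancel[OF tendsto_norm_zero_cancel])
qed

lemma ctendsto_cinner_right:
  assumes "ctendsto X a" shows "(\<lambda>n. cinner y (X n)) \<longlonglongrightarrow> cinner y a"
  using tendsto_cnj[OF ctendsto_cinner_left[OF assms, of y]] by (simp flip: cinner_commute)

lemma ctendsto_cnorm:
  assumes "ctendsto X a" shows "(\<lambda>n. cnorm (X n)) \<longlonglongrightarrow> cnorm a"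
proof -
  have "(\<lambda>n. norm (cnorm (X n) - cnorm a)) \<longlonglongrightarrow> 0"
    by (rule LIMSEQ_zero_squeeze[OF _ _ assms[unfolded ctendsto_def]])
      (use cnorm_triangle_ineq3 in auto)
  thus ?thesis by (rule LIM_zero_cancel[OF tendsto_norm_zero_cancel])
qed

lemma ctendsto_cnorm_sq:
  assumes "ctendsto X a" shows "(\<lambda>n. cnorm_sq (X n)) \<longlonglongrightarrow> cnorm_sq a"
  using tendsto_power[OF ctendsto_cnorm[OF assms], of 2] by (simp add: power2_cnorm)

lemma cCauchy_ctendsto:
  fixes X :: "nat \<Rightarrow> 'a::chilbert"
  assumes "cCauchy X" shows "\<exists>l. ctendsto X l"
proof -
  obtain l where "\<forall>e>0. \<exists>N. \<forall>n\<ge>N. cnorm (X n - l) < e"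
    using complete[of X] assms unfolding cCauchy_def cnorm_def by blast
  hence "ctendsto X l" unfolding ctendsto_def
    by (intro metric_LIMSEQ_I) (auto simp: dist_real_def)
  thus ?thesis by blast
qed

lemma ctendsto_imp_cCauchy:
  assumes "ctendsto X l" shows "cCauchy X"
  unfolding cCauchy_def
proof (intro allI impI)
  fix e :: real assume "e > 0"
  have "\<exists>N. \<forall>n\<ge>N. norm (cnorm (X n - l) - 0) < e/2"
    using assms \<open>e > 0\<close> unfolding ctendsto_def LIMSEQ_iff by (meson half_gt_zero)
  then obtain N where N: "\<forall>n\<ge>N. cnorm (X n - l) < e/2" by auto
  have "cnorm (X m - X n) < e" if "m \<ge> N" "n \<ge> N" for m n
  proof -
    have "cnorm (X m - X n) \<le> cnorm (X m - l) + cnorm (X n - l)"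
      using cnorm_diff_triangle[of "X m" "X n" l] cnorm_diff_commute[of l "X n"] by simp
    thus ?thesis using N[rule_format, OF that(1)] N[rule_format, OF that(2)] by linarith
  qed
  thus "\<exists>N. \<forall>m\<ge>N. \<forall>n\<ge>N. cnorm (X m - X n) < e" by blast
qed

section \<open>Bounded, selfadjoint and positive operators\<close>

lemma bounded_clinear_opD_add: "bounded_clinear_op T \<Longrightarrow> T (x + y) = T x + T y"
  by (simp add: bounded_clinear_op_def)

lemma bounded_clinear_opD_scaleC: "bounded_clinear_op T \<Longrightarrow> T (scaleC a x) = scaleC a (T x)"
  by (simp add: bounded_clinear_op_def)

lemma bounded_clinear_opD_zero: "bounded_clinear_op T \<Longrightarrow> T 0 = (0::'a::complex_inner)"
  using bounded_clinear_opD_add[of T 0 0] by simp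

lemma bounded_clinear_opD_diff: "bounded_clinear_op T \<Longrightarrow> T (x - y) = T x - T (y::'a::complex_inner)"
  using bounded_clinear_opD_scaleC[of T "-1" y] bounded_clinear_opD_add[of T x "- y"] by simp

lemma bounded_clinear_opD_sum: "bounded_clinear_op T \<Longrightarrow> T (\<Sum>i\<in>I. g i) = (\<Sum>i\<in>I. T (g i))"
  by (induction I rule: infinite_finite_induct)
    (simp_all add: bounded_clinear_opD_add bounded_clinear_opD_zero)

lemma bounded_clinear_op_pos_bound:
  "bounded_clinear_op T \<Longrightarrow> \<exists>C>0. \<forall>x. cnorm (T x) \<le> C * cnorm x"
proof -
  assume "bounded_clinear_op T"
  then obtain C where "\<forall>x. cnorm (T x) \<le> C * cnorm x" unfolding bounded_clinear_op_def by blast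
  hence "cnorm (T x) \<le> max C 1 * cnorm x" for x
    by (meson cnorm_ge_zero max.cobounded1 mult_right_mono order_trans)
  thus ?thesis by (intro exI[of _ "max C 1"]) auto
qed

lemma bounded_clinear_opI_contraction:
  assumes "\<And>x y. T (x + y) = T x + T y" "\<And>a x. T (scaleC a x) = scaleC a (T x)"
    and "\<And>x. cnorm (T x) \<le> cnorm x"
  shows "bounded_clinear_op T"
  unfolding bounded_clinear_op_def using assms by (metis mult_1)

lemma bounded_clinear_op_ctendsto:
  assumes "bounded_clinear_op T" "ctendsto X l" shows "ctendsto (\<lambda>n. T (X n)) (T l)"
proof -
  obtain C where C: "\<forall>x. cnorm (T x) \<le> C * cnorm x"
    using bounded_clinear_op_pos_bound[OF assms(1)] by blast
  show ?thesis unfolding ctendsto_def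
  proof (rule LIMSEQ_zero_squeeze)
    show "cnorm (T (X n) - T l) \<le> C * cnorm (X n - l)" for n
      using C bounded_clinear_opD_diff[OF assms(1), of "X n" l] by metis
    show "(\<lambda>n. C * cnorm (X n - l)) \<longlonglongrightarrow> 0"
      using tendsto_mult_right_zero[OF assms(2)[unfolded ctendsto_def]] by simp
  qed simp
qed

lemma bounded_clinear_op_compose:
  assumes "bounded_clinear_op S" "bounded_clinear_op T"
  shows "bounded_clinear_op (\<lambda>x. S (T x))"
proof -
  obtain C1 where C1: "C1 > 0" "\<forall>x. cnorm (S x) \<le> C1 * cnorm x"
    using bounded_clinear_op_pos_bound[OF assms(1)] by blast
  obtain C2 where C2: "\<forall>x. cnorm (T x) \<le> C2 * cnorm x"
    using bounded_clinear_op_pos_bound[OF assms(2)] by blast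
  have "cnorm (S (T x)) \<le> (C1 * C2) * cnorm x" for x
  proof -
    have "cnorm (S (T x)) \<le> C1 * cnorm (T x)" using C1 by blast
    also have "\<dots> \<le> C1 * (C2 * cnorm x)" using C2 C1(1) by (simp add: mult_left_mono)
    finally show ?thesis by (simp add: mult.assoc)
  qed
  thus ?thesis using assms unfolding bounded_clinear_op_def by auto
qed

lemma bounded_clinear_op_add:
  assumes "bounded_clinear_op S" "bounded_clinear_op T"
  shows "bounded_clinear_op (\<lambda>x. S x + T x)"
proof -
  obtain C1 where C1: "\<forall>x. cnorm (S x) \<le> C1 * cnorm x"
    using bounded_clinear_op_pos_bound[OF assms(1)] by blast
  obtain C2 where C2: "\<forall>x. cnorm (T x) \<le> C2 * cnorm x"
    using bounded_clinear_op_pos_bound[OF assms(2)] by blast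
  have "cnorm (S x + T x) \<le> (C1 + C2) * cnorm x" for x
    using cnorm_triangle[of "S x" "T x"] C1[rule_format, of x] C2[rule_format, of x]
    by (simp add: distrib_right)
  moreover have "S (x + y) + T (x + y) = (S x + T x) + (S y + T y)" for x y
    using assms by (simp add: bounded_clinear_opD_add algebra_simps)
  moreover have "S (scaleC a x) + T (scaleC a x) = scaleC a (S x + T x)" for a x
    using assms by (simp add: bounded_clinear_opD_scaleC scaleC_add_right)
  ultimately show ?thesis unfolding bounded_clinear_op_def by blast
qed

lemma bounded_clinear_op_scaleC:
  assumes "bounded_clinear_op S" shows "bounded_clinear_op (\<lambda>x. scaleC c (S x))"
proof -
  obtain C where C: "\<forall>x. cnorm (S x) \<le> C * cnorm x"
    using bounded_clinear_op_pos_bound[OF assms(1)] by blast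
  have "cnorm (scaleC c (S x)) \<le> (cmod c * C) * cnorm x" for x
    using C[rule_format, of x] by (simp add: cnorm_scaleC mult.assoc mult_left_mono)
  moreover have "scaleC c (S (x + y)) = scaleC c (S x) + scaleC c (S y)" for x y
    using assms by (simp add: bounded_clinear_opD_add scaleC_add_right)
  moreover have "scaleC c (S (scaleC a x)) = scaleC a (scaleC c (S x))" for a x
    using assms by (simp add: bounded_clinear_opD_scaleC scaleC_scaleC mult.commute)
  ultimately show ?thesis unfolding bounded_clinear_op_def by blast
qed

lemma bounded_clinear_op_ident: "bounded_clinear_op (\<lambda>x. x)"
  by (rule bounded_clinear_opI_contraction) auto

lemma bounded_clinear_op_zero: "bounded_clinear_op (\<lambda>x. 0::'a::complex_inner)"
  by (rule bounded_clinear_opI_contraction) auto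

lemma bounded_clinear_op_diff:
  assumes "bounded_clinear_op S" "bounded_clinear_op T"
  shows "bounded_clinear_op (\<lambda>x. S x - T x)"
  using bounded_clinear_op_add[OF assms(1) bounded_clinear_op_scaleC[OF assms(2), of "-1"]]
  by simp

lemma bounded_clinear_op_funpow: "bounded_clinear_op T \<Longrightarrow> bounded_clinear_op (T ^^ k)"
  by (induction k)
    (simp_all add: bounded_clinear_op_ident[unfolded id_def[symmetric]] o_def bounded_clinear_op_compose)

lemma selfadjoint_opD: "selfadjoint_op T \<Longrightarrow> cinner (T x) y = cinner x (T y)"
  by (simp add: selfadjoint_op_def)

lemma selfadjoint_op_cinner_real: "selfadjoint_op T \<Longrightarrow> cinner x (T x) \<in> \<real>"
  by (metis Reals_cnj_iff cinner_commute selfadjoint_opD)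

lemma selfadjoint_op_add:
  "selfadjoint_op S \<Longrightarrow> selfadjoint_op T \<Longrightarrow> selfadjoint_op (\<lambda>x. S x + T x)"
  by (simp add: selfadjoint_op_def cinner_add_left cinner_add_right)

lemma selfadjoint_op_scaleR:
  "selfadjoint_op S \<Longrightarrow> selfadjoint_op (\<lambda>x. scaleC (complex_of_real r) (S x))"
  by (simp add: selfadjoint_op_def cinner_scaleC_left cinner_scaleC_right)

lemma selfadjoint_op_diff:
  "selfadjoint_op S \<Longrightarrow> selfadjoint_op T \<Longrightarrow> selfadjoint_op (\<lambda>x. S x - T x)"
  by (simp add: selfadjoint_op_def cinner_diff_left cinner_diff_right)

lemma selfadjoint_op_ident: "selfadjoint_op (\<lambda>x. x)"
  by (simp add: selfadjoint_op_def)

lemma positive_opI: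
  assumes "bounded_clinear_op T" "selfadjoint_op T" "\<And>x. Re (cinner x (T x)) \<ge> 0"
  shows "positive_op T"
  using assms selfadjoint_op_cinner_real unfolding positive_op_def by blast

lemma positive_opD_bounded: "positive_op T \<Longrightarrow> bounded_clinear_op T"
  by (simp add: positive_op_def)

lemma positive_opD_selfadjoint: "positive_op T \<Longrightarrow> selfadjoint_op T"
  by (simp add: positive_op_def)

lemma positive_opD_nonneg: "positive_op T \<Longrightarrow> Re (cinner x (T x)) \<ge> 0"
  by (simp add: positive_op_def)

lemma positive_op_cauchy_schwarz:
  assumes "positive_op T"
  shows "(cmod (cinner x (T y)))^2 \<le> Re (cinner x (T x)) * Re (cinner y (T y))"
proof (rule hermitian_form_cauchy_schwarz[where f="\<lambda>u v. cinner u (T v)"])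
  have b: "bounded_clinear_op T" and s: "selfadjoint_op T"
    using assms by (auto simp: positive_op_def)
  show "cinner u (T (v + w)) = cinner u (T v) + cinner u (T w)" for u v w
    using b by (simp add: bounded_clinear_opD_add cinner_add_right)
  show "cinner u (T (scaleC a v)) = a * cinner u (T v)" for u a v
    using b by (simp add: bounded_clinear_opD_scaleC cinner_scaleC_right)
  show "cinner u (T v) = cnj (cinner v (T u))" for u v
    using selfadjoint_opD[OF s, of u v] cinner_commute[of "T u" v] by simp
qed (simp_all add: cinner_add_left cinner_scaleC_left positive_opD_nonneg[OF assms])

lemma positive_op_form_eq_0_imp_eq_0:
  assumes "positive_op T" "Re (cinner x (T x)) = 0" shows "T x = 0"
proof -
  have "(cmod (cinner x (T (T x))))^2 \<le> 0"
    using positive_op_cauchy_schwarz[OF assms(1), of x "T x"] assms(2) by simp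
  hence "cinner (T x) (T x) = 0"
    using selfadjoint_opD[OF positive_opD_selfadjoint[OF assms(1)], of x "T x"] by simp
  thus ?thesis by (simp add: cinner_eq_zero_iff)
qed

lemma op_le_id_form_le: "op_le T id \<Longrightarrow> Re (cinner x (T x)) \<le> cnorm_sq x"
  unfolding op_le_def positive_op_def by (simp add: cinner_diff_right cnorm_sq_def)

lemma op_le_idI:
  assumes "bounded_clinear_op T" "selfadjoint_op T" "\<And>x. Re (cinner x (T x)) \<le> cnorm_sq x"
  shows "op_le T id"
  unfolding op_le_def id_def
  using assms bounded_clinear_op_diff[OF bounded_clinear_op_ident]
    selfadjoint_op_diff[OF selfadjoint_op_ident]
  by (intro positive_opI) (auto simp: cinner_diff_right cnorm_sq_def)

lemma positive_op_le_id_contraction: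
  assumes "positive_op T" "op_le T id" shows "cnorm (T x) \<le> cnorm x"
proof -
  have "(cnorm_sq (T x))^2 \<le> Re (cinner (T x) (T (T x))) * Re (cinner x (T x))"
    using positive_op_cauchy_schwarz[OF assms(1), of "T x" x] by (simp add: cinner_self_eq)
  also have "\<dots> \<le> cnorm_sq (T x) * cnorm_sq x"
    using op_le_id_form_le[OF assms(2)] positive_opD_nonneg[OF assms(1)]
    by (meson cnorm_sq_nonneg mult_mono)
  finally have "cnorm_sq (T x) * cnorm_sq (T x) \<le> cnorm_sq (T x) * cnorm_sq x"
    by (simp add: power2_eq_square)
  hence "cnorm_sq (T x) \<le> cnorm_sq x"
    by (metis cnorm_sq_pos_iff cnorm_sq_eq_0_iff cnorm_sq_nonneg mult_le_cancel_left_pos)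
  thus ?thesis by (simp add: cnorm_le_iff_cnorm_sq_le)
qed

section \<open>Square roots of operators between 0 and I\<close>

lemma positive_op_cnorm_sq_bound:
  assumes pos: "positive_op D" and bound: "\<And>x. cnorm (D x) \<le> c * cnorm x" and "c \<ge> 0"
  shows "(cnorm_sq (D x))^2 \<le> c^3 * cnorm_sq x * Re (cinner x (D x))"
proof -
  have "cnorm_sq (D x) = Re (cinner x (D (D x)))"
    using selfadjoint_opD[OF positive_opD_selfadjoint[OF pos], of x "D x"] by (simp add: cnorm_sq_def)
  hence "(cnorm_sq (D x))^2 \<le> (cmod (cinner x (D (D x))))^2"
    using complex_Re_le_cmod[of "cinner x (D (D x))"] cnorm_sq_nonneg[of "D x"]
    by (intro power_mono) simp_all
  also have "\<dots> \<le> Re (cinner x (D x)) * Re (cinner (D x) (D (D x)))"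
    by (rule positive_op_cauchy_schwarz[OF pos])
  also have "\<dots> \<le> Re (cinner x (D x)) * (c^3 * cnorm_sq x)"
  proof (rule mult_left_mono[OF _ positive_opD_nonneg[OF pos]])
    have "Re (cinner (D x) (D (D x))) \<le> cnorm (D x) * cnorm (D (D x))"
      by (rule Re_cinner_le)
    also have "\<dots> \<le> (c * cnorm x) * (c * cnorm (D x))"
      using \<open>c \<ge> 0\<close> by (intro mult_mono bound) simp_all
    also have "\<dots> \<le> (c * cnorm x) * (c * (c * cnorm x))"
      using \<open>c \<ge> 0\<close> by (intro mult_left_mono bound) simp_all
    also have "\<dots> = c^3 * cnorm_sq x"
      by (simp add: power2_cnorm[symmetric] power2_eq_square power3_eq_cube)
    finally show "Re (cinner (D x) (D (D x))) \<le> c^3 * cnorm_sq x" .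
  qed
  finally show ?thesis by (simp add: mult_ac)
qed

lemma cCauchy_if_Cauchy_bound:
  fixes a :: "nat \<Rightarrow> real" and X :: "nat \<Rightarrow> 'a::complex_inner"
  assumes "Cauchy a" "c \<ge> 0"
    and bound: "\<And>m n. n \<le> m \<Longrightarrow> (cnorm_sq (X m - X n))^2 \<le> c * (a m - a n)"
  shows "cCauchy X"
  unfolding cCauchy_def
proof (intro allI impI)
  fix e :: real assume "e > 0"
  then obtain M where M: "\<forall>m\<ge>M. \<forall>n\<ge>M. norm (a m - a n) < e^4 / (c + 1)"
    using CauchyD[OF \<open>Cauchy a\<close>, of "e^4 / (c + 1)"] \<open>c \<ge> 0\<close> by auto
  have less: "cnorm (X m - X n) < e" if "m \<ge> M" "n \<ge> M" "n \<le> m" for m n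
  proof -
    have "(cnorm (X m - X n))^4 = (cnorm_sq (X m - X n))^2"
      by (simp flip: power2_cnorm power_mult)
    also have "\<dots> \<le> c * \<bar>a m - a n\<bar>"
      using bound[OF \<open>n \<le> m\<close>] mult_left_mono[OF abs_ge_self \<open>c \<ge> 0\<close>] by (rule order_trans)
    also have "\<dots> \<le> (c + 1) * \<bar>a m - a n\<bar>"
      by (simp add: distrib_right)
    also have "\<dots> < e^4"
      using M that \<open>c \<ge> 0\<close> by (simp add: pos_less_divide_eq mult.commute)
    finally show ?thesis using \<open>e > 0\<close> by (meson power_less_imp_less_base less_le)
  qed
  have "cnorm (X m - X n) < e" if "m \<ge> M" "n \<ge> M" for m n
    using less[of m n] less[of n m] that cnorm_diff_commute[of "X m" "X n"] by (cases "n \<le> m") auto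
  thus "\<exists>N. \<forall>m\<ge>N. \<forall>n\<ge>N. cnorm (X m - X n) < e" by blast
qed

text \<open>Vigier's theorem. For D = S m - S n, positive_op_cnorm_sq_bound controls |D x| by
  the increments of the convergent real sequence <x, S n x>.\<close>
lemma increasing_contractions_cCauchy:
  fixes S :: "nat \<Rightarrow> 'a::complex_inner \<Rightarrow> 'a"
  assumes contr: "\<And>n x. cnorm (S n x) \<le> cnorm x"
    and incr: "\<And>m n. n \<le> m \<Longrightarrow> positive_op (\<lambda>x. S m x - S n x)"
  shows "cCauchy (\<lambda>n. S n x)"
proof (rule cCauchy_if_Cauchy_bound)
  let ?a = "\<lambda>n. Re (cinner x (S n x))"
  have "incseq ?a"
    using positive_opD_nonneg[OF incr, of _ _ x] by (intro incseq_SucI) (simp add: cinner_diff_right)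
  moreover have "?a n \<le> cnorm_sq x" for n
    using Re_cinner_le[of x "S n x"] contr[of n x] mult_left_mono[OF contr[of n x] cnorm_ge_zero[of x]]
    by (simp add: power2_cnorm[symmetric] power2_eq_square)
  ultimately have "?a \<longlonglongrightarrow> (SUP n. ?a n)"
    by (intro LIMSEQ_incseq_SUP) (auto intro!: bdd_aboveI[where M="cnorm_sq x"])
  thus "Cauchy ?a" by (rule LIMSEQ_imp_Cauchy)
  show "(cnorm_sq (S m x - S n x))^2 \<le> 8 * cnorm_sq x * (?a m - ?a n)" if "n \<le> m" for m n
  proof -
    have "cnorm (S m y - S n y) \<le> 2 * cnorm y" for y
      using cnorm_diff_le[of "S m y" "S n y"] contr[of m y] contr[of n y] by linarith
    from positive_op_cnorm_sq_bound[OF incr[OF that] this, of x]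
    show ?thesis by (simp add: cinner_diff_right)
  qed
qed simp

lemma strong_limit_contraction:
  assumes lim: "\<And>x. ctendsto (\<lambda>n. S n x) (Y x)"
    and bounded: "\<And>n. bounded_clinear_op (S n)" and contr: "\<And>n x. cnorm (S n x) \<le> cnorm x"
  shows "bounded_clinear_op Y" and "cnorm (Y x) \<le> cnorm x"
proof -
  show contrY: "cnorm (Y x) \<le> cnorm x" for x
    using LIMSEQ_le_const2[OF ctendsto_cnorm[OF lim]] contr by blast
  show "bounded_clinear_op Y"
  proof (rule bounded_clinear_opI_contraction[OF _ _ contrY])
    have "ctendsto (\<lambda>n. S n (x + y)) (Y x + Y y)" for x y
      using ctendsto_add[OF lim lim] bounded_clinear_opD_add[OF bounded] by simp
    thus "Y (x + y) = Y x + Y y" for x y by (rule ctendsto_unique[OF lim])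
    have "ctendsto (\<lambda>n. S n (scaleC a x)) (scaleC a (Y x))" for a x
      using ctendsto_scaleC[OF lim] bounded_clinear_opD_scaleC[OF bounded] by simp
    thus "Y (scaleC a x) = scaleC a (Y x)" for a x by (rule ctendsto_unique[OF lim])
  qed
qed

lemma strong_limit_selfadjoint:
  assumes lim: "\<And>x. ctendsto (\<lambda>n. S n x) (Y x)" and sa: "\<And>n. selfadjoint_op (S n)"
  shows "selfadjoint_op Y"
  unfolding selfadjoint_op_def
proof (intro allI)
  fix x y
  have "(\<lambda>n. cinner x (S n y)) \<longlonglongrightarrow> cinner (Y x) y"
    using ctendsto_cinner_left[OF lim] selfadjoint_opD[OF sa] by simp
  thus "cinner (Y x) y = cinner x (Y y)"
    using ctendsto_cinner_right[OF lim] LIMSEQ_unique by blast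
qed

lemma strong_limit_ctendsto_apply:
  assumes lim: "\<And>x. ctendsto (\<lambda>n. S n x) (Y x)"
    and bounded: "\<And>n. bounded_clinear_op (S n)" and contr: "\<And>n x. cnorm (S n x) \<le> cnorm x"
    and "ctendsto X y"
  shows "ctendsto (\<lambda>n. S n (X n)) (Y y)"
  unfolding ctendsto_def
proof (rule LIMSEQ_zero_squeeze)
  show "cnorm (S n (X n) - Y y) \<le> cnorm (X n - y) + cnorm (S n y - Y y)" for n
  proof -
    have "S n (X n) - Y y = S n (X n - y) + (S n y - Y y)"
      using bounded_clinear_opD_diff[OF bounded] by simp
    hence "cnorm (S n (X n) - Y y) \<le> cnorm (S n (X n - y)) + cnorm (S n y - Y y)"
      by (simp only: cnorm_triangle)
    thus ?thesis using contr[of n "X n - y"] by linarith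
  qed
  show "(\<lambda>n. cnorm (X n - y) + cnorm (S n y - Y y)) \<longlonglongrightarrow> 0"
    using tendsto_add[OF \<open>ctendsto X y\<close>[unfolded ctendsto_def] lim[unfolded ctendsto_def]] by simp
qed simp

lemma strong_limit_commute:
  assumes lim: "\<And>x. ctendsto (\<lambda>n. S n x) (Y x)"
    and "bounded_clinear_op T" and comm: "\<And>n x. T (S n x) = S n (T x)"
  shows "T (Y x) = Y (T x)"
proof -
  have "ctendsto (\<lambda>n. S n (T x)) (T (Y x))"
    using bounded_clinear_op_ctendsto[OF \<open>bounded_clinear_op T\<close> lim, of x] by (simp add: comm)
  thus ?thesis using lim[of "T x"] by (rule ctendsto_unique)
qed

lemma positive_op_ident_minus_contraction:
  assumes "bounded_clinear_op Y" "selfadjoint_op Y" "\<And>x. cnorm (Y x) \<le> cnorm x"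
  shows "positive_op (\<lambda>x. x - Y x)"
proof (rule positive_opI)
  show "bounded_clinear_op (\<lambda>x. x - Y x)"
    by (rule bounded_clinear_op_diff[OF bounded_clinear_op_ident assms(1)])
  show "selfadjoint_op (\<lambda>x. x - Y x)"
    by (rule selfadjoint_op_diff[OF selfadjoint_op_ident assms(2)])
  show "Re (cinner x (x - Y x)) \<ge> 0" for x
    using Re_cinner_le[of x "Y x"] mult_left_mono[OF assms(3)[of x] cnorm_ge_zero[of x]]
    by (simp add: cinner_diff_right cnorm_sq_def[symmetric] power2_cnorm[symmetric] power2_eq_square)
qed

lemma positive_op_commuting_square_unique:
  assumes pR: "positive_op R" and pQ: "positive_op Q"
    and square: "\<And>x. R (R x) = Q (Q x)" and comm: "\<And>x. R (Q x) = Q (R x)"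
  shows "R = Q"
proof
  fix x
  have bR: "bounded_clinear_op R" and bQ: "bounded_clinear_op Q"
    using pR pQ by (auto simp: positive_op_def)
  define u where "u = R x - Q x"
  have "R u + Q u = 0"
    unfolding u_def bounded_clinear_opD_diff[OF bR] bounded_clinear_opD_diff[OF bQ] square comm
    by simp
  hence "cinner u (R u) + cinner u (Q u) = 0"
    by (simp flip: cinner_add_right)
  hence "Re (cinner u (R u)) + Re (cinner u (Q u)) = 0"
    by (metis plus_complex.sel(1) zero_complex.sel(1))
  hence "R u = 0" "Q u = 0"
    using positive_opD_nonneg[OF pR, of u] positive_opD_nonneg[OF pQ, of u]
      positive_op_form_eq_0_imp_eq_0[OF pR] positive_op_form_eq_0_imp_eq_0[OF pQ]
    by (simp_all add: add_nonneg_eq_0_iff)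
  have "cinner u u = cinner (R x) u - cinner (Q x) u"
    by (simp add: u_def cinner_diff_left)
  also have "\<dots> = cinner x (R u - Q u)"
    using selfadjoint_opD[OF positive_opD_selfadjoint[OF pR]]
      selfadjoint_opD[OF positive_opD_selfadjoint[OF pQ]]
    by (simp add: cinner_diff_right)
  also have "\<dots> = 0" using \<open>R u = 0\<close> \<open>Q u = 0\<close> by simp
  finally show "R x = Q x" by (simp add: u_def cinner_eq_zero_iff)
qed

text \<open>With C = I - A, the iteration Y_(n+1) = (C + Y_n^2)/2 increases strongly to the
  solution Y of 2 Y = C + Y^2, which is (I - Y)^2 = A; so I - Y is the square root.
  All iterates are polynomials in C with nonnegative coefficients: such polynomials
  commute and are positive, because C is.\<close>
locale sqrt_iteration =
  fixes A :: "'a::chilbert \<Rightarrow> 'a"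
  assumes positive_A: "positive_op A" and A_le_id: "op_le A id"
begin

definition C :: "'a \<Rightarrow> 'a" where "C x = x - A x"

lemma positive_C: "positive_op C"
  using A_le_id unfolding op_le_def C_def[abs_def] by (simp add: id_def)

lemma bounded_C: "bounded_clinear_op C"
  by (rule positive_opD_bounded[OF positive_C])

lemma C_contraction: "cnorm (C x) \<le> cnorm x"
proof (rule positive_op_le_id_contraction[OF positive_C])
  have "(\<lambda>x. id x - C x) = A" by (simp add: C_def fun_eq_iff)
  thus "op_le C id" unfolding op_le_def using positive_A by simp
qed

inductive C_poly :: "('a \<Rightarrow> 'a) \<Rightarrow> bool" where
  C_poly_funpow: "C_poly (C ^^ k)"
| C_poly_zero: "C_poly (\<lambda>x. 0)"
| C_poly_add: "C_poly S \<Longrightarrow> C_poly T \<Longrightarrow> C_poly (\<lambda>x. S x + T x)"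
| C_poly_scaleR: "r \<ge> 0 \<Longrightarrow> C_poly S \<Longrightarrow> C_poly (\<lambda>x. scaleC (complex_of_real r) (S x))"

lemma C_poly_C: "C_poly C"
  using C_poly_funpow[of 1] by simp

lemma C_poly_half: "C_poly S \<Longrightarrow> C_poly (\<lambda>x. scaleC (1/2) (S x))"
  using C_poly_scaleR[of "1/2" S] by simp

lemma C_poly_bounded: "C_poly S \<Longrightarrow> bounded_clinear_op S"
proof (induction rule: C_poly.induct)
  case (C_poly_funpow k) show ?case by (rule bounded_clinear_op_funpow[OF bounded_C])
next
  case C_poly_zero show ?case by (rule bounded_clinear_op_zero)
next
  case (C_poly_add S T) show ?case by (rule bounded_clinear_op_add[OF C_poly_add.IH])
next
  case (C_poly_scaleR r S) show ?case by (rule bounded_clinear_op_scaleC[OF C_poly_scaleR.IH])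
qed

lemma selfadjoint_funpow_C: "selfadjoint_op (C ^^ k)"
proof (induction k)
  case (Suc k)
  have "cinner (C ((C ^^ k) x)) y = cinner x ((C ^^ k) (C y))" for x y
    using selfadjoint_opD[OF positive_opD_selfadjoint[OF positive_C]] selfadjoint_opD[OF Suc.IH]
    by simp
  thus ?case by (simp add: selfadjoint_op_def funpow_swap1)
qed (simp add: selfadjoint_op_def)

lemma C_poly_selfadjoint: "C_poly S \<Longrightarrow> selfadjoint_op S"
proof (induction rule: C_poly.induct)
  case (C_poly_funpow k) show ?case by (rule selfadjoint_funpow_C)
next
  case C_poly_zero show ?case by (simp add: selfadjoint_op_def)
next
  case (C_poly_add S T) show ?case by (rule selfadjoint_op_add[OF C_poly_add.IH])
next
  case (C_poly_scaleR r S) show ?case by (rule selfadjoint_op_scaleR[OF C_poly_scaleR.IH])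
qed

lemma funpow_C_nonneg: "Re (cinner x ((C ^^ k) x)) \<ge> 0"
proof -
  define j where "j = k div 2"
  have "k = 2 * j \<or> k = Suc (2 * j)" unfolding j_def by presburger
  thus ?thesis
  proof
    assume "k = 2 * j"
    hence "cinner x ((C ^^ k) x) = cinner ((C ^^ j) x) ((C ^^ j) x)"
      using selfadjoint_opD[OF selfadjoint_funpow_C, of j x "(C ^^ j) x"]
      by (simp add: mult_2 funpow_add)
    thus ?thesis by (simp add: cinner_ge_zero)
  next
    assume "k = Suc (2 * j)"
    hence "cinner x ((C ^^ k) x) = cinner ((C ^^ j) x) (C ((C ^^ j) x))"
      using selfadjoint_opD[OF selfadjoint_funpow_C, of j x "C ((C ^^ j) x)"]
      by (simp add: mult_2 funpow_add funpow_swap1)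
    thus ?thesis using positive_opD_nonneg[OF positive_C] by simp
  qed
qed

lemma C_poly_nonneg: "C_poly S \<Longrightarrow> Re (cinner x (S x)) \<ge> 0"
proof (induction arbitrary: x rule: C_poly.induct)
  case (C_poly_funpow k) show ?case by (rule funpow_C_nonneg)
next
  case C_poly_zero show ?case by simp
next
  case (C_poly_add S T) thus ?case by (simp add: cinner_add_right)
next
  case (C_poly_scaleR r S) thus ?case by (simp add: cinner_scaleC_right)
qed

lemma C_poly_positive: "C_poly S \<Longrightarrow> positive_op S"
  by (rule positive_opI[OF C_poly_bounded C_poly_selfadjoint C_poly_nonneg])

lemma C_poly_funpow_compose: "C_poly T \<Longrightarrow> C_poly (\<lambda>x. (C ^^ k) (T x))"
proof (induction rule: C_poly.induct)
  case (C_poly_funpow j)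
  thus ?case using C_poly.C_poly_funpow[of "k + j"] by (simp add: funpow_add o_def)
next
  case C_poly_zero
  thus ?case using C_poly.C_poly_zero bounded_clinear_opD_zero[OF bounded_clinear_op_funpow[OF bounded_C]]
    by simp
next
  case (C_poly_add S T)
  thus ?case using C_poly.C_poly_add bounded_clinear_opD_add[OF bounded_clinear_op_funpow[OF bounded_C]]
    by simp
next
  case (C_poly_scaleR r S)
  thus ?case using C_poly.C_poly_scaleR bounded_clinear_opD_scaleC[OF bounded_clinear_op_funpow[OF bounded_C]]
    by simp
qed

lemma C_poly_compose: "C_poly S \<Longrightarrow> C_poly T \<Longrightarrow> C_poly (\<lambda>x. S (T x))"
proof (induction rule: C_poly.induct)
  case (C_poly_funpow k) thus ?case by (rule C_poly_funpow_compose)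
next
  case C_poly_zero thus ?case using C_poly.C_poly_zero by simp
next
  case (C_poly_add S1 S2) thus ?case using C_poly.C_poly_add by simp
next
  case (C_poly_scaleR r S) thus ?case using C_poly.C_poly_scaleR by simp
qed

lemma C_poly_commute_C: "C_poly S \<Longrightarrow> S (C x) = C (S x)"
proof (induction arbitrary: x rule: C_poly.induct)
  case (C_poly_funpow k) show ?case by (rule funpow_swap1[symmetric])
next
  case C_poly_zero show ?case using bounded_clinear_opD_zero[OF bounded_C] by simp
next
  case (C_poly_add S T) thus ?case using bounded_clinear_opD_add[OF bounded_C] by simp
next
  case (C_poly_scaleR r S) thus ?case using bounded_clinear_opD_scaleC[OF bounded_C] by simp
qed

lemma C_poly_commute_funpow: "C_poly S \<Longrightarrow> S ((C ^^ k) x) = (C ^^ k) (S x)"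
  by (induction k arbitrary: x) (simp_all add: C_poly_commute_C)

lemma C_poly_commute: "C_poly T \<Longrightarrow> C_poly S \<Longrightarrow> S (T x) = T (S x)"
proof (induction arbitrary: x rule: C_poly.induct)
  case (C_poly_funpow k) thus ?case by (rule C_poly_commute_funpow)
next
  case C_poly_zero thus ?case using bounded_clinear_opD_zero[OF C_poly_bounded] by simp
next
  case (C_poly_add T1 T2)
  thus ?case using bounded_clinear_opD_add[OF C_poly_bounded[OF C_poly_add.prems]] by simp
next
  case (C_poly_scaleR r T)
  thus ?case using bounded_clinear_opD_scaleC[OF C_poly_bounded[OF C_poly_scaleR.prems]] by simp
qed

primrec sqrt_iter :: "nat \<Rightarrow> 'a \<Rightarrow> 'a" where
  "sqrt_iter 0 = (\<lambda>x. 0)"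
| "sqrt_iter (Suc n) = (\<lambda>x. scaleC (1/2) (C x + sqrt_iter n (sqrt_iter n x)))"

declare sqrt_iter.simps(2)[simp del]

lemma C_poly_sqrt_iter: "C_poly (sqrt_iter n)"
proof (induction n)
  case (Suc n)
  show ?case
    unfolding sqrt_iter.simps(2) by (rule C_poly_half[OF C_poly_add[OF C_poly_C C_poly_compose[OF Suc Suc]]])
qed (simp add: C_poly_zero)

lemma bounded_sqrt_iter: "bounded_clinear_op (sqrt_iter n)"
  by (rule C_poly_bounded[OF C_poly_sqrt_iter])

lemma sqrt_iter_contraction: "cnorm (sqrt_iter n x) \<le> cnorm x"
proof (induction n arbitrary: x)
  case (Suc n)
  have "cnorm (sqrt_iter (Suc n) x) \<le> (1/2) * (cnorm (C x) + cnorm (sqrt_iter n (sqrt_iter n x)))"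
    using cnorm_triangle by (simp add: cnorm_scaleC sqrt_iter.simps(2))
  also have "\<dots> \<le> cnorm x"
    using C_contraction[of x] Suc.IH[of "sqrt_iter n x"] Suc.IH[of x] by simp
  finally show ?case .
qed simp

text \<open>Y_(n+2) - Y_(n+1) = (Y_(n+1) + Y_n) (Y_(n+1) - Y_n) / 2, as the iterates commute.\<close>
lemma C_poly_sqrt_iter_Suc_diff: "C_poly (\<lambda>x. sqrt_iter (Suc n) x - sqrt_iter n x)"
proof (induction n)
  case 0
  show ?case using C_poly_half[OF C_poly_C] by (simp add: sqrt_iter.simps(2))
next
  case (Suc n)
  let ?Y1 = "sqrt_iter (Suc n)" and ?Y0 = "sqrt_iter n"
  have "sqrt_iter (Suc (Suc n)) x - ?Y1 x
      = scaleC (1/2) (?Y1 (?Y1 x + ?Y0 x) - ?Y0 (?Y1 x + ?Y0 x))" for x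
  proof -
    have "?Y1 (?Y0 x) = ?Y0 (?Y1 x)" by (rule C_poly_commute[OF C_poly_sqrt_iter C_poly_sqrt_iter])
    hence "?Y1 (?Y1 x + ?Y0 x) - ?Y0 (?Y1 x + ?Y0 x) = ?Y1 (?Y1 x) - ?Y0 (?Y0 x)"
      by (simp add: bounded_clinear_opD_add[OF bounded_sqrt_iter])
    moreover have "sqrt_iter (Suc (Suc n)) x - ?Y1 x
        = scaleC (1/2) ((C x + ?Y1 (?Y1 x)) - (C x + ?Y0 (?Y0 x)))"
      by (simp only: sqrt_iter.simps(2) scaleC_diff_right)
    ultimately show ?thesis by simp
  qed
  moreover have "C_poly (\<lambda>x. scaleC (1/2) (?Y1 (?Y1 x + ?Y0 x) - ?Y0 (?Y1 x + ?Y0 x)))"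
    by (rule C_poly_half[OF C_poly_compose[OF Suc C_poly_add[OF C_poly_sqrt_iter C_poly_sqrt_iter]]])
  ultimately show ?case by simp
qed

lemma C_poly_sqrt_iter_diff: "n \<le> m \<Longrightarrow> C_poly (\<lambda>x. sqrt_iter m x - sqrt_iter n x)"
proof (induction m rule: dec_induct)
  case (step k)
  have "(\<lambda>x. sqrt_iter (Suc k) x - sqrt_iter n x)
      = (\<lambda>x. (sqrt_iter (Suc k) x - sqrt_iter k x) + (sqrt_iter k x - sqrt_iter n x))"
    by simp
  thus ?case using C_poly_add[OF C_poly_sqrt_iter_Suc_diff[of k] step.IH] by (simp only:)
qed (simp add: C_poly_zero)

definition Y :: "'a \<Rightarrow> 'a" where "Y x = (SOME l. ctendsto (\<lambda>n. sqrt_iter n x) l)"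

lemma sqrt_iter_ctendsto: "ctendsto (\<lambda>n. sqrt_iter n x) (Y x)"
proof -
  have "cCauchy (\<lambda>n. sqrt_iter n x)"
    by (rule increasing_contractions_cCauchy[OF sqrt_iter_contraction
          C_poly_positive[OF C_poly_sqrt_iter_diff]])
  thus ?thesis unfolding Y_def by (rule someI_ex[OF cCauchy_ctendsto])
qed

lemmas Y_contraction = strong_limit_contraction[OF sqrt_iter_ctendsto bounded_sqrt_iter sqrt_iter_contraction]

lemma selfadjoint_Y: "selfadjoint_op Y"
  by (rule strong_limit_selfadjoint[OF sqrt_iter_ctendsto C_poly_selfadjoint[OF C_poly_sqrt_iter]])

lemma Y_fixpoint: "scaleC 2 (Y x) = C x + Y (Y x)"
proof -
  have "ctendsto (\<lambda>n. sqrt_iter (Suc n) x) (scaleC (1/2) (C x + Y (Y x)))"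
    using ctendsto_scaleC[OF ctendsto_add[OF ctendsto_const strong_limit_ctendsto_apply[OF
          sqrt_iter_ctendsto bounded_sqrt_iter sqrt_iter_contraction sqrt_iter_ctendsto]]]
    by (simp add: sqrt_iter.simps(2))
  moreover have "ctendsto (\<lambda>n. sqrt_iter (Suc n) x) (Y x)"
    using sqrt_iter_ctendsto[of x] unfolding ctendsto_def by (rule LIMSEQ_Suc)
  ultimately have "scaleC 2 (Y x) = scaleC 2 (scaleC (1/2) (C x + Y (Y x)))"
    using ctendsto_unique by metis
  thus ?thesis by (simp add: scaleC_scaleC scaleC_one)
qed

definition R :: "'a \<Rightarrow> 'a" where "R x = x - Y x"

lemma positive_R: "positive_op R"
  unfolding R_def[abs_def]
  by (rule positive_op_ident_minus_contraction[OF Y_contraction(1) selfadjoint_Y Y_contraction(2)])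

lemma R_square: "R (R x) = A x"
proof -
  have "R (R x) = x - scaleC 2 (Y x) + Y (Y x)"
    unfolding R_def bounded_clinear_opD_diff[OF Y_contraction(1)] scaleC_two by simp
  thus ?thesis unfolding Y_fixpoint C_def by simp
qed

lemma R_commute:
  assumes "bounded_clinear_op S" "\<And>x. S (A x) = A (S x)"
  shows "S (R x) = R (S x)"
proof -
  have "S (C x) = C (S x)" for x
    using assms bounded_clinear_opD_diff[OF assms(1)] by (simp add: C_def)
  hence "S (sqrt_iter n x) = sqrt_iter n (S x)" for n x
    by (induction n arbitrary: x)
      (simp_all add: bounded_clinear_opD_zero[OF assms(1)] bounded_clinear_opD_add[OF assms(1)]
        bounded_clinear_opD_scaleC[OF assms(1)] sqrt_iter.simps(2))
  hence "S (Y x) = Y (S x)"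
    by (rule strong_limit_commute[OF sqrt_iter_ctendsto assms(1)])
  thus ?thesis using bounded_clinear_opD_diff[OF assms(1)] by (simp add: R_def)
qed

end

lemma
  fixes A :: "'a::chilbert \<Rightarrow> 'a"
  assumes "positive_op A" "op_le A id"
  shows positive_op_sqrt: "positive_op (op_sqrt A)"
    and op_sqrt_square: "op_sqrt A (op_sqrt A x) = A x"
proof -
  interpret sqrt_iteration A using assms by unfold_locales
  have "op_sqrt A = R"
    unfolding op_sqrt_def
  proof (rule the_equality)
    show "positive_op R \<and> (\<forall>x. R (R x) = A x)" using positive_R R_square by blast
    fix Q assume Q: "positive_op Q \<and> (\<forall>x. Q (Q x) = A x)"
    hence "Q (R x) = R (Q x)" for x
      using R_commute[OF positive_opD_bounded] by (metis (no_types))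
    thus "Q = R"
      using positive_op_commuting_square_unique[of Q R] Q positive_R R_square by metis
  qed
  thus "positive_op (op_sqrt A)" "op_sqrt A (op_sqrt A x) = A x"
    using positive_R R_square by simp_all
qed

lemma cinner_op_sqrt:
  fixes B :: "'a::chilbert \<Rightarrow> 'a"
  assumes "positive_op B" "op_le B id"
  shows "cinner (op_sqrt B u) (op_sqrt B v) = cinner u (B v)"
  using selfadjoint_opD[OF positive_opD_selfadjoint[OF positive_op_sqrt[OF assms]]] op_sqrt_square[OF assms]
  by simp

lemma double_sum_cinner:
  fixes f :: "'x \<Rightarrow> 'a::complex_inner"
  assumes "bounded_clinear_op E"
  shows "(\<Sum>i<n. \<Sum>j<n. cnj (c i) * c j * cinner (f (xs i)) (E (f (xs j))))
       = cinner (\<Sum>i<n. scaleC (c i) (f (xs i))) (E (\<Sum>j<n. scaleC (c j) (f (xs j))))"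
proof -
  have "cinner (\<Sum>i<n. scaleC (c i) (f (xs i))) (E (\<Sum>j<n. scaleC (c j) (f (xs j))))
      = (\<Sum>i<n. cnj (c i) * (\<Sum>j<n. c j * cinner (f (xs i)) (E (f (xs j)))))"
    by (simp add: bounded_clinear_opD_sum[OF assms] bounded_clinear_opD_scaleC[OF assms]
        cinner_sum_left cinner_sum_right cinner_scaleC_left cinner_scaleC_right)
      (simp add: sum_distrib_left, subst sum.swap, simp add: mult.left_commute)
  also have "\<dots> = (\<Sum>i<n. \<Sum>j<n. cnj (c i) * c j * cinner (f (xs i)) (E (f (xs j))))"
    by (simp add: sum_distrib_left mult.assoc)
  finally show ?thesis by simp
qed

lemma pd_kernel_cinner_positive_op:
  fixes f :: "'x \<Rightarrow> 'a::complex_inner"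
  assumes "positive_op E"
  shows "pd_kernel (\<lambda>x y. cinner (f x) (E (f y)))"
  unfolding pd_kernel_def
  by (simp only: double_sum_cinner[OF positive_opD_bounded[OF assms]]
      selfadjoint_op_cinner_real[OF positive_opD_selfadjoint[OF assms]] positive_opD_nonneg[OF assms])
    simp

lemma kernel_le_if_op_sqrt_representation:
  fixes \<psi> :: "'x \<Rightarrow> 'l::chilbert"
  assumes "in_HS L \<psi>" "positive_op B" "op_le B id"
    and K: "\<And>x y. K x y = cinner (op_sqrt B (\<psi> x)) (op_sqrt B (\<psi> y))"
  shows "kernel_le K L"
proof -
  define E where "E v = v - B v" for v
  have "positive_op E"
    using \<open>op_le B id\<close> by (simp add: op_le_def E_def[abs_def])
  moreover have "(\<lambda>x y. L x y - K x y) = (\<lambda>x y. cinner (\<psi> x) (E (\<psi> y)))"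
    using \<open>in_HS L \<psi>\<close>
    by (simp add: in_HS_def K cinner_op_sqrt[OF assms(2,3)] cinner_diff_right E_def)
  ultimately show ?thesis
    unfolding kernel_le_def by (simp add: pd_kernel_cinner_positive_op)
qed

section \<open>Orthogonal projections and the Riesz representation\<close>

definition closed_csubspace :: "'a::complex_inner set \<Rightarrow> bool" where
  "closed_csubspace N \<longleftrightarrow> 0 \<in> N \<and> (\<forall>u\<in>N. \<forall>v\<in>N. u + v \<in> N) \<and> (\<forall>a. \<forall>u\<in>N. scaleC a u \<in> N) \<and>
     (\<forall>X u. (\<forall>n. X n \<in> N) \<longrightarrow> ctendsto X u \<longrightarrow> u \<in> N)"

lemma closed_csubspaceI:
  assumes "0 \<in> N" "\<And>u v. u \<in> N \<Longrightarrow> v \<in> N \<Longrightarrow> u + v \<in> N"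
    and "\<And>a u. u \<in> N \<Longrightarrow> scaleC a u \<in> N"
    and "\<And>X u. (\<And>n. X n \<in> N) \<Longrightarrow> ctendsto X u \<Longrightarrow> u \<in> N"
  shows "closed_csubspace N"
  using assms unfolding closed_csubspace_def by blast

lemma
  assumes "closed_csubspace N"
  shows closed_csubspace_zero: "0 \<in> N"
    and closed_csubspace_add: "u \<in> N \<Longrightarrow> v \<in> N \<Longrightarrow> u + v \<in> N"
    and closed_csubspace_scaleC: "u \<in> N \<Longrightarrow> scaleC a u \<in> N"
    and closed_csubspace_limit: "(\<And>n. X n \<in> N) \<Longrightarrow> ctendsto X u \<Longrightarrow> u \<in> N"
  using assms unfolding closed_csubspace_def by blast+

lemma closed_csubspace_diff:
  "closed_csubspace N \<Longrightarrow> u \<in> N \<Longrightarrow> v \<in> N \<Longrightarrow> u - v \<in> N"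
  using closed_csubspace_add closed_csubspace_scaleC[of N v "-1"] by fastforce

lemma cCauchy_if_cnorm_sq_le:
  assumes bound: "\<And>m n. cnorm_sq (X m - X n) \<le> b m + b n" and "b \<longlonglongrightarrow> 0"
  shows "cCauchy X"
  unfolding cCauchy_def
proof (intro allI impI)
  fix e :: real assume "e > 0"
  hence "e^2 / 2 > 0" by simp
  then obtain N where N: "\<forall>n\<ge>N. \<bar>b n\<bar> < e^2 / 2"
    using LIMSEQ_D[OF \<open>b \<longlonglongrightarrow> 0\<close> \<open>e^2 / 2 > 0\<close>] by auto
  have "cnorm (X m - X n) < e" if "m \<ge> N" "n \<ge> N" for m n
  proof -
    have "b m < e^2 / 2" "b n < e^2 / 2"
      using N that by (auto simp: abs_less_iff)
    hence "(cnorm (X m - X n))^2 < e^2"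
      using bound[of m n] by (simp add: power2_cnorm)
    thus ?thesis using \<open>e > 0\<close> by (meson power_less_imp_less_base less_le)
  qed
  thus "\<exists>N. \<forall>m\<ge>N. \<forall>n\<ge>N. cnorm (X m - X n) < e" by blast
qed

lemma minimizing_sequence_cCauchy:
  assumes midpoint: "\<And>u v. u \<in> N \<Longrightarrow> v \<in> N \<Longrightarrow> scaleC (1/2) (u + v) \<in> N"
    and inf: "\<And>v. v \<in> N \<Longrightarrow> d \<le> cnorm_sq (w - v)"
    and s: "\<And>n. s n \<in> N" "\<And>n. cnorm_sq (w - s n) \<le> d + inverse (real (Suc n))"
  shows "cCauchy s"
proof (rule cCauchy_if_cnorm_sq_le)
  show "(\<lambda>n. 2 * inverse (real (Suc n))) \<longlonglongrightarrow> 0"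
    using tendsto_mult_right_zero[OF LIMSEQ_inverse_real_of_nat] by simp
  fix m n
  have "(w - s m) + (w - s n) = scaleC 2 (w - scaleC (1/2) (s m + s n))"
    by (simp add: scaleC_diff_right scaleC_scaleC scaleC_one scaleC_two)
  hence "cnorm_sq ((w - s m) + (w - s n)) \<ge> 4 * d"
    using inf[OF midpoint[OF s(1) s(1)], of m n] by (simp add: cnorm_sq_scaleC)
  moreover have "cnorm_sq (s n - s m) + cnorm_sq ((w - s m) + (w - s n))
      = 2 * cnorm_sq (w - s m) + 2 * cnorm_sq (w - s n)"
    using parallelogram_law[of "w - s m" "w - s n"] by simp
  ultimately show "cnorm_sq (s m - s n) \<le> 2 * inverse (real (Suc m)) + 2 * inverse (real (Suc n))"
    using s(2)[of m] s(2)[of n] cnorm_sq_diff_commute[of "s m" "s n"] by linarith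
qed

lemma exists_nearest_point:
  fixes N :: "'a::chilbert set"
  assumes "closed_csubspace N"
  shows "\<exists>p\<in>N. \<forall>v\<in>N. cnorm_sq (w - p) \<le> cnorm_sq (w - v)"
proof -
  define d where "d = Inf ((\<lambda>v. cnorm_sq (w - v)) ` N)"
  have bdd: "bdd_below ((\<lambda>v. cnorm_sq (w - v)) ` N)" by (rule bdd_belowI[where m=0]) auto
  have inf: "d \<le> cnorm_sq (w - v)" if "v \<in> N" for v
    unfolding d_def using bdd that by (simp add: cInf_lower)
  have "\<exists>v\<in>N. cnorm_sq (w - v) < d + inverse (real (Suc n))" for n
  proof (rule ccontr)
    assume "\<not> ?thesis"
    hence "d + inverse (real (Suc n)) \<le> d"
      unfolding d_def using closed_csubspace_zero[OF assms]
      by (intro cInf_greatest) (auto simp: not_less)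
    thus False by simp
  qed
  then obtain s where s: "\<And>n. s n \<in> N" "\<And>n. cnorm_sq (w - s n) < d + inverse (real (Suc n))"
    by metis
  have "cCauchy s"
  proof (rule minimizing_sequence_cCauchy[of N d w s])
    show "scaleC (1/2) (u + v) \<in> N" if "u \<in> N" "v \<in> N" for u v
      using that closed_csubspace_add[OF assms] closed_csubspace_scaleC[OF assms] by blast
    show "cnorm_sq (w - s n) \<le> d + inverse (real (Suc n))" for n
      using s(2)[of n] by simp
  qed (use inf s in auto)
  then obtain p where p: "ctendsto s p" using cCauchy_ctendsto by blast
  have "(\<lambda>n. cnorm_sq (w - s n)) \<longlonglongrightarrow> cnorm_sq (w - p)"
    by (rule ctendsto_cnorm_sq[OF ctendsto_diff[OF ctendsto_const p]])
  hence "cnorm_sq (w - p) \<le> d"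
    using LIMSEQ_le[OF _ LIMSEQ_inverse_real_of_nat_add[of d]] s(2) less_imp_le by blast
  moreover have "p \<in> N" by (rule closed_csubspace_limit[OF assms s(1) p])
  ultimately show ?thesis using inf by (blast intro: order_trans)
qed

text \<open>Minimality of p along the line through p in the direction of v, at the optimal
  parameter t = <v, w - p> / |v|^2.\<close>
lemma nearest_point_orthogonal:
  assumes "closed_csubspace N" "p \<in> N" "v \<in> N"
    and nearest: "\<And>v. v \<in> N \<Longrightarrow> cnorm_sq (w - p) \<le> cnorm_sq (w - v)"
  shows "cinner v (w - p) = 0"
proof (cases "v = 0")
  case False
  define e where "e = w - p"
  define a where "a = cinner v e"
  have v_pos: "cnorm_sq v > 0" using False by (simp add: cnorm_sq_pos_iff)
  define t where "t = complex_of_real (1 / cnorm_sq v) * a"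
  have "p + scaleC t v \<in> N"
    using assms(1-3) closed_csubspace_add closed_csubspace_scaleC by blast
  hence "cnorm_sq e \<le> cnorm_sq (e - scaleC t v)"
    using nearest unfolding e_def by (simp add: algebra_simps)
  also have "\<dots> = cnorm_sq e + (cmod t)^2 * cnorm_sq v - 2 * Re (t * cnj a)"
    by (simp add: cnorm_sq_diff cnorm_sq_scaleC cinner_scaleC_right a_def flip: cinner_commute)
  also have "Re (t * cnj a) = (cmod a)^2 / cnorm_sq v"
    using cnj_mult_self[of a] by (simp add: t_def mult.commute)
  also have "(cmod t)^2 * cnorm_sq v = (cmod a)^2 / cnorm_sq v"
  proof -
    have "cmod t = cmod a / cnorm_sq v" using v_pos by (simp add: t_def norm_mult norm_divide)
    thus ?thesis using v_pos by (simp add: power2_eq_square)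
  qed
  finally have "(cmod a)^2 \<le> 0"
    using v_pos by (simp add: divide_le_0_iff)
  thus ?thesis by (simp add: a_def e_def)
qed simp

definition orth_proj :: "'a::complex_inner set \<Rightarrow> 'a \<Rightarrow> 'a" where
  "orth_proj N u = (SOME p. p \<in> N \<and> (\<forall>v\<in>N. cinner v (u - p) = 0))"

context
  fixes N :: "'a::chilbert set"
  assumes N: "closed_csubspace N"
begin

lemma orth_proj: "orth_proj N u \<in> N" "v \<in> N \<Longrightarrow> cinner v (u - orth_proj N u) = 0"
proof -
  have "\<exists>p. p \<in> N \<and> (\<forall>v\<in>N. cinner v (u - p) = 0)"
    using exists_nearest_point[OF N] nearest_point_orthogonal[OF N] by metis
  hence "orth_proj N u \<in> N \<and> (\<forall>v\<in>N. cinner v (u - orth_proj N u) = 0)"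
    unfolding orth_proj_def by (rule someI_ex)
  thus "orth_proj N u \<in> N" "v \<in> N \<Longrightarrow> cinner v (u - orth_proj N u) = 0" by blast+
qed

lemma orthogonal_subspace_eq_0: "m \<in> N \<Longrightarrow> (\<And>v. v \<in> N \<Longrightarrow> cinner v m = 0) \<Longrightarrow> m = 0"
  using cinner_eq_zero_iff by blast

lemma orth_proj_add: "orth_proj N (u + u') = orth_proj N u + orth_proj N u'"
proof -
  define m where "m = orth_proj N (u + u') - orth_proj N u - orth_proj N u'"
  have "m \<in> N" unfolding m_def using orth_proj(1) closed_csubspace_diff[OF N] by blast
  moreover have "cinner v m = 0" if "v \<in> N" for v
  proof -
    have "m = (u - orth_proj N u) + (u' - orth_proj N u') - (u + u' - orth_proj N (u + u'))"
      unfolding m_def by (simp add: algebra_simps)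
    hence "cinner v m = cinner v (u - orth_proj N u) + cinner v (u' - orth_proj N u')
        - cinner v (u + u' - orth_proj N (u + u'))"
      by (simp only: cinner_add_right cinner_diff_right cinner_minus_right)
    thus ?thesis using orth_proj(2)[OF that] by simp
  qed
  ultimately have "m = 0" by (rule orthogonal_subspace_eq_0)
  thus ?thesis unfolding m_def by (simp add: algebra_simps)
qed

lemma orth_proj_scaleC: "orth_proj N (scaleC a u) = scaleC a (orth_proj N u)"
proof -
  define m where "m = orth_proj N (scaleC a u) - scaleC a (orth_proj N u)"
  have "m \<in> N"
    unfolding m_def using orth_proj(1) closed_csubspace_diff[OF N] closed_csubspace_scaleC[OF N]
    by blast
  moreover have "cinner v m = 0" if "v \<in> N" for v
  proof -
    have "m = scaleC a (u - orth_proj N u) - (scaleC a u - orth_proj N (scaleC a u))"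
      unfolding m_def by (simp add: algebra_simps scaleC_diff_right)
    hence "cinner v m = a * cinner v (u - orth_proj N u) - cinner v (scaleC a u - orth_proj N (scaleC a u))"
      by (simp add: cinner_scaleC_right cinner_diff_right)
    thus ?thesis using orth_proj(2)[OF that] by simp
  qed
  ultimately have "m = 0" by (rule orthogonal_subspace_eq_0)
  thus ?thesis unfolding m_def by simp
qed

lemma orth_proj_cnorm_le: "cnorm (orth_proj N u) \<le> cnorm u"
proof -
  have "cnorm_sq u = cnorm_sq (orth_proj N u) + cnorm_sq (u - orth_proj N u)"
    using cnorm_sq_add[of "orth_proj N u" "u - orth_proj N u"] orth_proj(2)[of "orth_proj N u" u] orth_proj(1)[of u]
    by simp
  thus ?thesis
    using cnorm_sq_nonneg[of "u - orth_proj N u"] by (simp add: cnorm_le_iff_cnorm_sq_le)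
qed

lemma orth_proj_id: "m \<in> N \<Longrightarrow> orth_proj N m = m"
  using orthogonal_subspace_eq_0[of "orth_proj N m - m"] orth_proj(2)[of _ m] orth_proj(1)[of m]
    closed_csubspace_diff[OF N]
  by (simp add: cinner_diff_right)

end

lemma closed_csubspace_kernel:
  assumes add: "\<And>x y. f (x + y) = f x + f y" and scale: "\<And>a x. f (scaleC a x) = a * f x"
    and bound: "\<And>x. cmod (f x) \<le> C * cnorm x"
  shows "closed_csubspace {v. f v = 0}"
proof (rule closed_csubspaceI)
  have diff: "f (x - y) = f x - f y" for x y using add[of "x - y" y] by simp
  show "0 \<in> {v. f v = 0}" using add[of 0 0] by simp
  show "u \<in> {v. f v = 0}" if X: "\<And>n. X n \<in> {v. f v = 0}" and lim: "ctendsto X u" for X u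
  proof -
    have "(\<lambda>n. cmod (f u)) \<longlonglongrightarrow> 0"
    proof (rule LIMSEQ_zero_squeeze)
      show "cmod (f u) \<le> C * cnorm (X n - u)" for n
        using bound[of "X n - u"] diff[of "X n" u] X[of n] by simp
      show "(\<lambda>n. C * cnorm (X n - u)) \<longlonglongrightarrow> 0"
        using tendsto_mult_right_zero[OF lim[unfolded ctendsto_def]] by simp
    qed simp
    thus ?thesis by (simp add: LIMSEQ_const_iff)
  qed
qed (simp_all add: add scale)

text \<open>For e \<noteq> 0 orthogonal to N = ker f, the vector f e v - f v e lies in N, hence is
  orthogonal to e; this determines f v.\<close>
lemma riesz_representation:
  fixes f :: "'a::chilbert \<Rightarrow> complex"
  assumes add: "\<And>x y. f (x + y) = f x + f y" and scale: "\<And>a x. f (scaleC a x) = a * f x"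
    and bound: "\<And>x. cmod (f x) \<le> C * cnorm x"
  shows "\<exists>z. \<forall>v. f v = cinner z v"
proof (cases "\<forall>v. f v = 0")
  case False
  then obtain w where "f w \<noteq> 0" by blast
  have diff: "f (x - y) = f x - f y" for x y using add[of "x - y" y] by simp
  define N where "N = {v. f v = 0}"
  have N: "closed_csubspace N"
    unfolding N_def by (rule closed_csubspace_kernel[OF add scale bound])
  define e where "e = w - orth_proj N w"
  have "f e = f w" using orth_proj(1)[OF N, of w] diff by (simp add: e_def N_def)
  hence "e \<noteq> 0" using \<open>f w \<noteq> 0\<close> scale[of 0 0] by auto
  have "f v = cinner (scaleC (cnj (f e) / complex_of_real (cnorm_sq e)) e) v" for v
  proof -
    have "scaleC (f e) v - scaleC (f v) e \<in> N"
      using diff scale by (simp add: N_def mult.commute)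
    hence "cinner (scaleC (f e) v - scaleC (f v) e) e = 0"
      using orth_proj(2)[OF N] by (simp add: e_def)
    hence "cinner e (scaleC (f e) v - scaleC (f v) e) = 0"
      using cinner_commute[of e "scaleC (f e) v - scaleC (f v) e"] by simp
    hence "f e * cinner e v = f v * complex_of_real (cnorm_sq e)"
      by (simp add: cinner_simps cinner_self_eq)
    thus ?thesis using \<open>e \<noteq> 0\<close>
      by (simp add: cinner_scaleC_left eq_divide_eq cnorm_sq_eq_0_iff)
  qed
  thus ?thesis by blast
qed (auto intro: exI[of _ 0])

section \<open>Dominated feature maps extend to contractions\<close>

definition lincomb :: "('x \<Rightarrow> 'a::complex_inner) \<Rightarrow> (complex \<times> 'x) list \<Rightarrow> 'a" where
  "lincomb f cs = sum_list (map (\<lambda>p. scaleC (fst p) (f (snd p))) cs)"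

definition scale_coeffs :: "complex \<Rightarrow> (complex \<times> 'x) list \<Rightarrow> (complex \<times> 'x) list" where
  "scale_coeffs a cs = map (\<lambda>p. (a * fst p, snd p)) cs"

lemma lincomb_Nil[simp]: "lincomb f [] = 0"
  by (simp add: lincomb_def)

lemma lincomb_append: "lincomb f (cs @ ds) = lincomb f cs + lincomb f ds"
  by (simp add: lincomb_def)

lemma lincomb_single: "lincomb f [(1, x)] = f x"
  by (simp add: lincomb_def scaleC_one)

lemma lincomb_scale_coeffs: "lincomb f (scale_coeffs a cs) = scaleC a (lincomb f cs)"
  by (induction cs) (simp_all add: lincomb_def scale_coeffs_def scaleC_add_right scaleC_scaleC)

lemma lincomb_diff: "lincomb f (cs @ scale_coeffs (-1) ds) = lincomb f cs - lincomb f ds"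
  by (simp add: lincomb_append lincomb_scale_coeffs)

lemma lincomb_eq_sum: "lincomb f cs = (\<Sum>i<length cs. scaleC (fst (cs ! i)) (f (snd (cs ! i))))"
  by (simp add: lincomb_def sum_list_sum_nth atLeast0LessThan)

lemma kernel_le_imp_cnorm_lincomb_le:
  assumes "in_HS K \<phi>" "in_HS L \<psi>" "kernel_le K L"
  shows "cnorm (lincomb \<phi> cs) \<le> cnorm (lincomb \<psi> cs)"
proof -
  define n xs c where "n = length cs" and "xs i = snd (cs ! i)" and "c i = fst (cs ! i)" for i
  have "Re (\<Sum>i<n. \<Sum>j<n. cnj (c i) * c j * (L (xs i) (xs j) - K (xs i) (xs j))) \<ge> 0"
    using \<open>kernel_le K L\<close> unfolding kernel_le_def pd_kernel_def by blast
  moreover have "(\<Sum>i<n. \<Sum>j<n. cnj (c i) * c j * (L (xs i) (xs j) - K (xs i) (xs j)))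
      = (\<Sum>i<n. \<Sum>j<n. cnj (c i) * c j * L (xs i) (xs j))
      - (\<Sum>i<n. \<Sum>j<n. cnj (c i) * c j * K (xs i) (xs j))"
    by (simp add: right_diff_distrib sum_subtractf)
  moreover have "(\<Sum>i<n. \<Sum>j<n. cnj (c i) * c j * L (xs i) (xs j))
      = cinner (lincomb \<psi> cs) (lincomb \<psi> cs)"
    using double_sum_cinner[OF bounded_clinear_op_ident, of c \<psi> xs n] \<open>in_HS L \<psi>\<close>
    unfolding in_HS_def lincomb_eq_sum n_def c_def xs_def by simp
  moreover have "(\<Sum>i<n. \<Sum>j<n. cnj (c i) * c j * K (xs i) (xs j))
      = cinner (lincomb \<phi> cs) (lincomb \<phi> cs)"
    using double_sum_cinner[OF bounded_clinear_op_ident, of c \<phi> xs n] \<open>in_HS K \<phi>\<close>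
    unfolding in_HS_def lincomb_eq_sum n_def c_def xs_def by simp
  ultimately show ?thesis by (simp add: cnorm_le_iff_cnorm_sq_le cnorm_sq_def)
qed

definition clinear_contraction :: "('a::complex_inner \<Rightarrow> 'b::complex_inner) \<Rightarrow> bool" where
  "clinear_contraction T \<longleftrightarrow> (\<forall>x y. T (x + y) = T x + T y) \<and>
     (\<forall>a x. T (scaleC a x) = scaleC a (T x)) \<and> (\<forall>x. cnorm (T x) \<le> cnorm x)"

text \<open>The map psi x \<mapsto> phi x is well defined and contractive on the span of psi(X) by
  domination, extends by continuity to the closed span (the graph of the extension is
  limit_graph), and to the whole space by precomposing with the orthogonal projection.\<close>
locale dominated_feature_maps =
  fixes \<phi> :: "'x \<Rightarrow> 'k::chilbert" and \<psi> :: "'x \<Rightarrow> 'l::chilbert"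
  assumes dominated: "\<And>cs. cnorm (lincomb \<phi> cs) \<le> cnorm (lincomb \<psi> cs)"
begin

lemma dominated_diff: "cnorm (lincomb \<phi> a - lincomb \<phi> b) \<le> cnorm (lincomb \<psi> a - lincomb \<psi> b)"
  using dominated[of "a @ scale_coeffs (-1) b"] by (simp add: lincomb_diff)

definition closed_span :: "'l set" where
  "closed_span = {u. \<exists>s. ctendsto (\<lambda>n. lincomb \<psi> (s n)) u}"

definition limit_graph :: "'l \<Rightarrow> 'k \<Rightarrow> bool" where
  "limit_graph u w \<longleftrightarrow> (\<exists>s. ctendsto (\<lambda>n. lincomb \<psi> (s n)) u \<and> ctendsto (\<lambda>n. lincomb \<phi> (s n)) w)"

lemma limit_graph_exists: "u \<in> closed_span \<Longrightarrow> \<exists>w. limit_graph u w"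
proof -
  assume "u \<in> closed_span"
  then obtain s where s: "ctendsto (\<lambda>n. lincomb \<psi> (s n)) u" unfolding closed_span_def by blast
  have "cCauchy (\<lambda>n. lincomb \<phi> (s n))"
    unfolding cCauchy_def
  proof (intro allI impI)
    fix e :: real assume "e > 0"
    then obtain N where "\<forall>m\<ge>N. \<forall>n\<ge>N. cnorm (lincomb \<psi> (s m) - lincomb \<psi> (s n)) < e"
      using ctendsto_imp_cCauchy[OF s] unfolding cCauchy_def by blast
    thus "\<exists>N. \<forall>m\<ge>N. \<forall>n\<ge>N. cnorm (lincomb \<phi> (s m) - lincomb \<phi> (s n)) < e"
      using dominated_diff order_le_less_trans by blast
  qed
  then obtain w where "ctendsto (\<lambda>n. lincomb \<phi> (s n)) w" using cCauchy_ctendsto by blast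
  thus ?thesis using s unfolding limit_graph_def by blast
qed

lemma limit_graph_closed_span: "limit_graph u w \<Longrightarrow> u \<in> closed_span"
  unfolding limit_graph_def closed_span_def by blast

lemma limit_graph_unique: "limit_graph u w \<Longrightarrow> limit_graph u w' \<Longrightarrow> w = w'"
proof -
  assume "limit_graph u w" "limit_graph u w'"
  then obtain s s' where s: "ctendsto (\<lambda>n. lincomb \<psi> (s n)) u" "ctendsto (\<lambda>n. lincomb \<phi> (s n)) w"
    and s': "ctendsto (\<lambda>n. lincomb \<psi> (s' n)) u" "ctendsto (\<lambda>n. lincomb \<phi> (s' n)) w'"
    unfolding limit_graph_def by blast
  have "cnorm (w - w') \<le> cnorm (u - u)"
    using ctendsto_cnorm[OF ctendsto_diff[OF s(2) s'(2)]] ctendsto_cnorm[OF ctendsto_diff[OF s(1) s'(1)]]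
    by (rule LIMSEQ_le) (use dominated_diff in blast)
  hence "cnorm (w - w') = 0" using cnorm_ge_zero[of "w - w'"] by simp
  thus ?thesis by simp
qed

lemma limit_graph_cnorm_le: "limit_graph u w \<Longrightarrow> cnorm w \<le> cnorm u"
proof -
  assume "limit_graph u w"
  then obtain s where s: "ctendsto (\<lambda>n. lincomb \<psi> (s n)) u" "ctendsto (\<lambda>n. lincomb \<phi> (s n)) w"
    unfolding limit_graph_def by blast
  show ?thesis
    by (rule LIMSEQ_le[OF ctendsto_cnorm[OF s(2)] ctendsto_cnorm[OF s(1)]]) (use dominated in blast)
qed

lemma limit_graph_add: "limit_graph u w \<Longrightarrow> limit_graph u' w' \<Longrightarrow> limit_graph (u + u') (w + w')"
proof -
  assume "limit_graph u w" "limit_graph u' w'"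
  then obtain s s' where s: "ctendsto (\<lambda>n. lincomb \<psi> (s n)) u" "ctendsto (\<lambda>n. lincomb \<phi> (s n)) w"
    and s': "ctendsto (\<lambda>n. lincomb \<psi> (s' n)) u'" "ctendsto (\<lambda>n. lincomb \<phi> (s' n)) w'"
    unfolding limit_graph_def by blast
  show ?thesis
    unfolding limit_graph_def using ctendsto_add[OF s(1) s'(1)] ctendsto_add[OF s(2) s'(2)]
    by (intro exI[of _ "\<lambda>n. s n @ s' n"]) (simp add: lincomb_append)
qed

lemma limit_graph_scaleC: "limit_graph u w \<Longrightarrow> limit_graph (scaleC a u) (scaleC a w)"
proof -
  assume "limit_graph u w"
  then obtain s where s: "ctendsto (\<lambda>n. lincomb \<psi> (s n)) u" "ctendsto (\<lambda>n. lincomb \<phi> (s n)) w"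
    unfolding limit_graph_def by blast
  show ?thesis
    unfolding limit_graph_def using ctendsto_scaleC[OF s(1)] ctendsto_scaleC[OF s(2)]
    by (intro exI[of _ "\<lambda>n. scale_coeffs a (s n)"]) (simp add: lincomb_scale_coeffs)
qed

lemma limit_graph_generator: "limit_graph (\<psi> x) (\<phi> x)"
  unfolding limit_graph_def by (intro exI[of _ "\<lambda>n. [(1, x)]"]) (simp add: lincomb_single)

lemma closed_span_limit:
  assumes X: "\<And>n. X n \<in> closed_span" and lim: "ctendsto X u"
  shows "u \<in> closed_span"
proof -
  have "\<forall>n. \<exists>s. ctendsto (\<lambda>k. lincomb \<psi> (s k)) (X n)"
    using X unfolding closed_span_def by blast
  then obtain S where S: "\<And>n. ctendsto (\<lambda>k. lincomb \<psi> (S n k)) (X n)"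
    by metis
  have "\<exists>k. cnorm (lincomb \<psi> (S n k) - X n) < inverse (real (Suc n))" for n
    using LIMSEQ_D[OF S[of n, unfolded ctendsto_def], of "inverse (real (Suc n))"] by auto
  then obtain k where k: "\<And>n. cnorm (lincomb \<psi> (S n (k n)) - X n) < inverse (real (Suc n))"
    by metis
  have "ctendsto (\<lambda>n. lincomb \<psi> (S n (k n))) u" unfolding ctendsto_def
  proof (rule LIMSEQ_zero_squeeze)
    show "cnorm (lincomb \<psi> (S n (k n)) - u) \<le> inverse (real (Suc n)) + cnorm (X n - u)" for n
      using cnorm_diff_triangle[of "lincomb \<psi> (S n (k n))" u "X n"] k[of n] by linarith
    show "(\<lambda>n. inverse (real (Suc n)) + cnorm (X n - u)) \<longlonglongrightarrow> 0"
      using tendsto_add[OF LIMSEQ_inverse_real_of_nat lim[unfolded ctendsto_def]] by simp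
  qed simp
  thus ?thesis unfolding closed_span_def by (intro CollectI exI[of _ "\<lambda>n. S n (k n)"])
qed

lemma closed_csubspace_closed_span: "closed_csubspace closed_span"
proof (rule closed_csubspaceI)
  show "0 \<in> closed_span"
    unfolding closed_span_def by (intro CollectI exI[of _ "\<lambda>n. []"]) simp
  show "u + v \<in> closed_span" if "u \<in> closed_span" "v \<in> closed_span" for u v
    using limit_graph_add limit_graph_exists[OF that(1)] limit_graph_exists[OF that(2)]
      limit_graph_closed_span by blast
  show "scaleC a u \<in> closed_span" if "u \<in> closed_span" for a u
    using limit_graph_scaleC limit_graph_exists[OF that] limit_graph_closed_span by blast
qed (rule closed_span_limit)

definition extension :: "'l \<Rightarrow> 'k" where
  "extension u = (SOME w. limit_graph (orth_proj closed_span u) w)"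

lemma limit_graph_extension: "limit_graph (orth_proj closed_span u) (extension u)"
  unfolding extension_def
  using limit_graph_exists[OF orth_proj(1)[OF closed_csubspace_closed_span]] by (rule someI_ex)

lemma clinear_contraction_extension: "clinear_contraction extension"
  unfolding clinear_contraction_def
proof (intro conjI allI)
  note proj = orth_proj_add[OF closed_csubspace_closed_span]
    orth_proj_scaleC[OF closed_csubspace_closed_span]
  show "extension (x + y) = extension x + extension y" for x y
    using limit_graph_add[OF limit_graph_extension limit_graph_extension]
      limit_graph_extension[of "x + y"] limit_graph_unique
    unfolding proj by blast
  show "extension (scaleC a x) = scaleC a (extension x)" for a x
    using limit_graph_scaleC[OF limit_graph_extension, of a x]
      limit_graph_extension[of "scaleC a x"] limit_graph_unique
    unfolding proj by blast
  show "cnorm (extension x) \<le> cnorm x" for x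
    using limit_graph_cnorm_le[OF limit_graph_extension, of x]
      orth_proj_cnorm_le[OF closed_csubspace_closed_span, of x] by linarith
qed

lemma extension_generator: "extension (\<psi> x) = \<phi> x"
proof -
  have "orth_proj closed_span (\<psi> x) = \<psi> x"
    by (rule orth_proj_id[OF closed_csubspace_closed_span limit_graph_closed_span[OF limit_graph_generator]])
  thus ?thesis
    using limit_graph_extension[of "\<psi> x"] limit_graph_generator[of x] limit_graph_unique by simp
qed

end

lemma exists_clinear_contraction_extension:
  fixes \<phi> :: "'x \<Rightarrow> 'k::chilbert" and \<psi> :: "'x \<Rightarrow> 'l::chilbert"
  assumes "\<And>cs. cnorm (lincomb \<phi> cs) \<le> cnorm (lincomb \<psi> cs)"
  shows "\<exists>T. clinear_contraction T \<and> (\<forall>x. T (\<psi> x) = \<phi> x)"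
proof -
  interpret dominated_feature_maps \<phi> \<psi> using assms by unfold_locales
  show ?thesis using clinear_contraction_extension extension_generator by blast
qed

section \<open>The Gram operator of a contraction\<close>

lemma gram_operator_contraction:
  assumes B: "\<And>u v. cinner (B u) v = cinner (T u) (T v)" and contr: "\<And>x. cnorm (T x) \<le> cnorm x"
  shows "cnorm (B u) \<le> cnorm u"
proof -
  have "cnorm_sq (B u) \<le> cnorm (T u) * cnorm (T (B u))"
    using Re_cinner_le[of "T u" "T (B u)"] B[of u "B u"] by (simp add: cnorm_sq_def)
  also have "\<dots> \<le> cnorm u * cnorm (B u)"
    by (rule mult_mono[OF contr contr]) simp_all
  finally have "cnorm (B u) * cnorm (B u) \<le> cnorm u * cnorm (B u)"
    by (simp add: power2_cnorm[symmetric] power2_eq_square)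
  thus ?thesis
    using cnorm_ge_zero[of "B u"] by (cases "cnorm (B u) = 0") (simp_all add: mult_le_cancel_right_pos)
qed

lemma exists_gram_operator:
  fixes T :: "'l::chilbert \<Rightarrow> 'k::complex_inner"
  assumes "clinear_contraction T"
  shows "\<exists>B. positive_op B \<and> op_le B id \<and> (\<forall>u v. cinner (B u) v = cinner (T u) (T v))"
proof -
  have add: "T (x + y) = T x + T y" and scale: "T (scaleC a x) = scaleC a (T x)"
    and contr: "cnorm (T x) \<le> cnorm x" for x y a
    using assms unfolding clinear_contraction_def by blast+
  have "\<exists>z. \<forall>v. cinner (T u) (T v) = cinner z v" for u
  proof (rule riesz_representation)
    show "cmod (cinner (T u) (T x)) \<le> cnorm (T u) * cnorm x" for x
      using cinner_cauchy_schwarz[of "T u" "T x"] mult_left_mono[OF contr cnorm_ge_zero[of "T u"]]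
      by (rule order_trans)
  qed (simp_all add: add scale cinner_add_right cinner_scaleC_right)
  then obtain B where B: "\<And>u v. cinner (B u) v = cinner (T u) (T v)" by metis
  have sa: "selfadjoint_op B"
    unfolding selfadjoint_op_def
  proof (intro allI)
    fix u v
    have "cinner u (B v) = cnj (cinner (B v) u)" by (rule cinner_commute)
    also have "\<dots> = cinner (T u) (T v)" by (simp add: B flip: cinner_commute)
    finally show "cinner (B u) v = cinner u (B v)" by (simp add: B)
  qed
  have "B (x + y) = B x + B y" "B (scaleC a x) = scaleC a (B x)" for x y a
    by (rule cinner_eqI, simp add: B cinner_simps add scale)+
  hence bounded: "bounded_clinear_op B"
    using gram_operator_contraction[OF B contr] by (intro bounded_clinear_opI_contraction)
  have form: "cinner u (B u) = cinner (T u) (T u)" for u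
    using selfadjoint_opD[OF sa, of u u] B by simp
  have "positive_op B"
    by (rule positive_opI[OF bounded sa]) (simp add: form cinner_ge_zero)
  moreover have "op_le B id"
    by (rule op_le_idI[OF bounded sa])
      (use form contr in \<open>simp add: cnorm_sq_def[symmetric] cnorm_le_iff_cnorm_sq_le\<close>)
  ultimately show ?thesis using B by blast
qed

lemma kernel_le_imp_op_sqrt_representation:
  fixes \<phi> :: "'x \<Rightarrow> 'k::chilbert" and \<psi> :: "'x \<Rightarrow> 'l::chilbert"
  assumes "in_HS K \<phi>" "in_HS L \<psi>" "kernel_le K L"
  shows "\<exists>B. positive_op B \<and> op_le B id \<and>
    (\<forall>x y. K x y = cinner (op_sqrt B (\<psi> x)) (op_sqrt B (\<psi> y)))"
proof -
  obtain T where T: "clinear_contraction T" "\<And>x. T (\<psi> x) = \<phi> x"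
    using exists_clinear_contraction_extension kernel_le_imp_cnorm_lincomb_le[OF assms] by blast
  obtain B where B: "positive_op B" "op_le B id" "\<And>u v. cinner (B u) v = cinner (T u) (T v)"
    using exists_gram_operator[OF T(1)] by blast
  have "cinner (op_sqrt B (\<psi> x)) (op_sqrt B (\<psi> y)) = cinner (B (\<psi> x)) (\<psi> y)" for x y
    unfolding cinner_op_sqrt[OF B(1,2)]
    by (rule selfadjoint_opD[OF positive_opD_selfadjoint[OF B(1)], symmetric])
  hence "K x y = cinner (op_sqrt B (\<psi> x)) (op_sqrt B (\<psi> y))" for x y
    using \<open>in_HS K \<phi>\<close> by (simp add: in_HS_def B(3) T(2))
  thus ?thesis using B(1,2) by blast
qed

theorem theorem5p7:
  fixes K L :: "'x \<Rightarrow> 'x \<Rightarrow> complex"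
    and \<phi> :: "'x \<Rightarrow> 'k::chilbert"
    and \<psi> :: "'x \<Rightarrow> 'l::chilbert"
  assumes "pd_kernel K" and "pd_kernel L"
    and "in_HS K \<phi>" and "in_HS L \<psi>"
  shows "kernel_le K L \<longleftrightarrow>
    (\<exists>B::'l \<Rightarrow> 'l. positive_op B \<and> op_le B id \<and>
       (\<forall>x y. K x y = cinner (\<phi> x) (\<phi> y) \<and>
              cinner (\<phi> x) (\<phi> y) = cinner (op_sqrt B (\<psi> x)) (op_sqrt B (\<psi> y))))"
proof -
  have "K x y = cinner (\<phi> x) (\<phi> y)" for x y
    using \<open>in_HS K \<phi>\<close> by (simp add: in_HS_def)
  thus ?thesis
    using kernel_le_imp_op_sqrt_representation[OF assms(3,4)]
      kernel_le_if_op_sqrt_representation[OF assms(4)]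
    by auto
qed

end
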